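(* Let $(V_n,\mathbf r_n)$ be a sequence of finite transitive Markov chains with $|V_n|=n$ and $t_{\mathrm{rel}}(\mathbf r_n)/t_{\mathrm{meet}}(\mathbf r_n)\to0$. Then for any sequence $t_n$ with $t_{\mathrm{rel}}(\mathbf r_n)/t_n\to0$ and $t_n/t_{\mathrm{meet}}(\mathbf r_n)\to0$, \[\lim_{n\to\infty}\frac{2t_{\mathrm{meet}}(\mathbf r_n)\alpha_{t_n}}n=1.\]
   Context: Markov chains: continuous time, irreducible, symmetric rates; transitive means for all $u,v$ there is a permutation $\phi$ with $\phi(u)=v$ and $r_{\phi(x),\phi(y)}=r_{x,y}$, and transitive chains satisfy $r(x)=\sum_yr_{x,y}=1$. $t_{\mathrm{rel}}$: inverse spectral gap. $t_{\mathrm{meet}}$: expected first meeting time of two independent walks started independently uniformly. With $\nu_x(y)=r_{x,y}/r(x)$, $\alpha_t=\mathbb P(\tau_{\mathrm{meet}}>t)$ for independent walks started at $x$ and at a $\nu_x$-distributed state (independent of $x$). *)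

theory Defs
  imports "HOL-Analysis.Analysis"
begin

text \<open>A continuous-time Markov chain on a finite state space V is given by
  its transition rates r x y (x \<noteq> y); the convention r x x = 0 is used.\<close>

definition total_rate :: "'a set \<Rightarrow> ('a \<Rightarrow> 'a \<Rightarrow> real) \<Rightarrow> 'a \<Rightarrow> real" where
  "total_rate V r x = (\<Sum>y\<in>V. r x y)"

definition irreducible_chain :: "'a set \<Rightarrow> ('a \<Rightarrow> 'a \<Rightarrow> real) \<Rightarrow> bool" where
  "irreducible_chain V r \<longleftrightarrow>
     (\<forall>x\<in>V. \<forall>y\<in>V. (x, y) \<in> {(a, b). a \<in> V \<and> b \<in> V \<and> r a b > 0}\<^sup>*)"

definition symmetric_rates :: "'a set \<Rightarrow> ('a \<Rightarrow> 'a \<Rightarrow> real) \<Rightarrow> bool" where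
  "symmetric_rates V r \<longleftrightarrow> (\<forall>x\<in>V. \<forall>y\<in>V. r x y = r y x)"

definition markov_rates :: "'a set \<Rightarrow> ('a \<Rightarrow> 'a \<Rightarrow> real) \<Rightarrow> bool" where
  "markov_rates V r \<longleftrightarrow> finite V \<and> V \<noteq> {} \<and>
     (\<forall>x\<in>V. \<forall>y\<in>V. r x y \<ge> 0) \<and> (\<forall>x\<in>V. r x x = 0)"

definition transitive_rates :: "'a set \<Rightarrow> ('a \<Rightarrow> 'a \<Rightarrow> real) \<Rightarrow> bool" where
  "transitive_rates V r \<longleftrightarrow>
     (\<forall>u\<in>V. \<forall>v\<in>V. \<exists>\<phi>. bij_betw \<phi> V V \<and> \<phi> u = v \<and>
        (\<forall>x\<in>V. \<forall>y\<in>V. r (\<phi> x) (\<phi> y) = r x y))"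

definition transitive_chain :: "'a set \<Rightarrow> ('a \<Rightarrow> 'a \<Rightarrow> real) \<Rightarrow> bool" where
  "transitive_chain V r \<longleftrightarrow> markov_rates V r \<and> irreducible_chain V r \<and>
     symmetric_rates V r \<and> transitive_rates V r \<and> (\<forall>x\<in>V. total_rate V r x = 1)"

definition generator :: "'a set \<Rightarrow> ('a \<Rightarrow> 'a \<Rightarrow> real) \<Rightarrow> ('a \<Rightarrow> real) \<Rightarrow> 'a \<Rightarrow> real" where
  "generator V r f x = (\<Sum>y\<in>V. r x y * (f y - f x))"

definition gen_matrix :: "'a set \<Rightarrow> ('a \<Rightarrow> 'a \<Rightarrow> real) \<Rightarrow> 'a \<Rightarrow> 'a \<Rightarrow> real" where
  "gen_matrix V r x y = (if x = y then - (\<Sum>z\<in>V - {x}. r x z) else r x y)"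

definition spectral_gap :: "'a set \<Rightarrow> ('a \<Rightarrow> 'a \<Rightarrow> real) \<Rightarrow> real" where
  "spectral_gap V r = Inf {mu. mu > 0 \<and> (\<exists>f. (\<exists>x\<in>V. f x \<noteq> 0) \<and>
       (\<forall>x\<in>V. - generator V r f x = mu * f x))}"

definition t_rel :: "'a set \<Rightarrow> ('a \<Rightarrow> 'a \<Rightarrow> real) \<Rightarrow> real" where
  "t_rel V r = 1 / spectral_gap V r"

fun mat_pow :: "'b set \<Rightarrow> ('b \<Rightarrow> 'b \<Rightarrow> real) \<Rightarrow> nat \<Rightarrow> 'b \<Rightarrow> 'b \<Rightarrow> real" where
  "mat_pow S A 0 = (\<lambda>i j. if i = j then 1 else 0)"
| "mat_pow S A (Suc k) = (\<lambda>i j. \<Sum>l\<in>S. mat_pow S A k i l * A l j)"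

definition mat_exp :: "'b set \<Rightarrow> ('b \<Rightarrow> 'b \<Rightarrow> real) \<Rightarrow> real \<Rightarrow> 'b \<Rightarrow> 'b \<Rightarrow> real" where
  "mat_exp S A t i j = (\<Sum>k. (t ^ k / fact k) * mat_pow S A k i j)"

text \<open>Two independent copies of the chain, killed when they meet: sub-generator of the
  product chain restricted to off-diagonal pairs.\<close>
definition offdiag :: "'a set \<Rightarrow> ('a \<times> 'a) set" where
  "offdiag V = {(x, y). x \<in> V \<and> y \<in> V \<and> x \<noteq> y}"

definition killed_gen :: "'a set \<Rightarrow> ('a \<Rightarrow> 'a \<Rightarrow> real) \<Rightarrow> 'a \<times> 'a \<Rightarrow> 'a \<times> 'a \<Rightarrow> real" where
  "killed_gen V r p q =
     gen_matrix V r (fst p) (fst q) * (if snd p = snd q then 1 else 0)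
   + (if fst p = fst q then 1 else 0) * gen_matrix V r (snd p) (snd q)"

text \<open>P(tau_meet > t) for independent walks started at x and y.\<close>
definition meet_survival :: "'a set \<Rightarrow> ('a \<Rightarrow> 'a \<Rightarrow> real) \<Rightarrow> real \<Rightarrow> 'a \<Rightarrow> 'a \<Rightarrow> real" where
  "meet_survival V r t x y =
     (if x = y then 0 else (\<Sum>q\<in>offdiag V. mat_exp (offdiag V) (killed_gen V r) t (x, y) q))"

text \<open>Expected meeting time from independent uniform starts: E[tau] = int_0^inf P(tau > t) dt.\<close>
definition t_meet :: "'a set \<Rightarrow> ('a \<Rightarrow> 'a \<Rightarrow> real) \<Rightarrow> real" where
  "t_meet V r = (1 / real (card V) ^ 2) *
     (\<Sum>x\<in>V. \<Sum>y\<in>V. integral {0..} (\<lambda>t. meet_survival V r t x y))"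

text \<open>alpha_t: start at x and at a nu_x-distributed neighbour, nu_x(y) = r x y / r(x);
  averaged over uniform x (for transitive chains this does not depend on x).\<close>
definition alpha :: "'a set \<Rightarrow> ('a \<Rightarrow> 'a \<Rightarrow> real) \<Rightarrow> real \<Rightarrow> real" where
  "alpha V r t = (1 / real (card V)) *
     (\<Sum>x\<in>V. \<Sum>y\<in>V. (r x y / total_rate V r x) * meet_survival V r t x y)"

end

theory Submission
  imports Defs
begin

text \<open>
  Two independent walks killed when they meet form a chain on the off-diagonal pairs with a
  symmetric sub-generator. In an orthonormal eigenbasis of it, mode k has decay rate \<open>\<lambda>\<^sub>k\<close>,
  total mass \<open>\<beta>\<^sub>k\<close> and weight \<open>c\<^sub>k = (\<beta>\<^sub>k / n)\<^sup>2\<close>, and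
  \<open>t_meet = \<Sum> c\<^sub>k / \<lambda>\<^sub>k\<close> while \<open>2 t_meet \<alpha>\<^sub>t / n = t_meet \<Sum> c\<^sub>k \<lambda>\<^sub>k exp (- \<lambda>\<^sub>k t)\<close>.
  The Poincare inequality of the product chain gives \<open>\<lambda>\<^sub>k \<ge> (1 - c\<^sub>k) / t_rel\<close>, and applied to a
  mass-free combination of two modes it shows that all modes but the slowest one decay at rate
  at least \<open>1 / t_rel\<close>. So \<open>t_meet\<close> is \<open>c\<^sub>0 / \<lambda>\<^sub>0\<close> up to \<open>t_rel\<close>, \<open>1 - c\<^sub>0 \<le> \<lambda>\<^sub>0 t_rel\<close>, and since
  \<open>\<lambda> exp (- \<lambda> t) \<le> 1 / t\<close> the other modes add at most \<open>t_meet (1 - c\<^sub>0) / t\<close> to the second sum.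
  When \<open>t_rel \<ll> t \<ll> t_meet\<close> this forces \<open>c\<^sub>0 \<rightarrow> 1\<close>, \<open>\<lambda>\<^sub>0 t_meet \<rightarrow> 1\<close> and \<open>\<lambda>\<^sub>0 t \<rightarrow> 0\<close>.
\<close>

section \<open>Spectral theorem for real symmetric matrices\<close>

text \<open>Vectors and matrices are real functions on a finite index set; values outside it play no role.\<close>

definition dot :: "'a set \<Rightarrow> ('a \<Rightarrow> real) \<Rightarrow> ('a \<Rightarrow> real) \<Rightarrow> real" where
  "dot S u v = (\<Sum>i\<in>S. u i * v i)"

definition mat_vec :: "'a set \<Rightarrow> ('a \<Rightarrow> 'a \<Rightarrow> real) \<Rightarrow> ('a \<Rightarrow> real) \<Rightarrow> 'a \<Rightarrow> real" where
  "mat_vec S A u i = (\<Sum>j\<in>S. A i j * u j)"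

definition symmetric_matrix :: "'a set \<Rightarrow> ('a \<Rightarrow> 'a \<Rightarrow> real) \<Rightarrow> bool" where
  "symmetric_matrix S A \<longleftrightarrow> (\<forall>i\<in>S. \<forall>j\<in>S. A i j = A j i)"

definition orthonormal_family :: "'a set \<Rightarrow> nat \<Rightarrow> (nat \<Rightarrow> 'a \<Rightarrow> real) \<Rightarrow> bool" where
  "orthonormal_family S K \<phi> \<longleftrightarrow> (\<forall>j<K. \<forall>k<K. dot S (\<phi> j) (\<phi> k) = (if j = k then 1 else 0))"

definition eigen_family ::
    "'a set \<Rightarrow> ('a \<Rightarrow> 'a \<Rightarrow> real) \<Rightarrow> nat \<Rightarrow> (nat \<Rightarrow> 'a \<Rightarrow> real) \<Rightarrow> (nat \<Rightarrow> real) \<Rightarrow> bool" where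
  "eigen_family S A K \<phi> \<mu> \<longleftrightarrow> (\<forall>k<K. \<forall>i\<in>S. mat_vec S A (\<phi> k) i = \<mu> k * \<phi> k i)"

definition complete_family :: "'a set \<Rightarrow> nat \<Rightarrow> (nat \<Rightarrow> 'a \<Rightarrow> real) \<Rightarrow> bool" where
  "complete_family S K \<phi> \<longleftrightarrow> (\<forall>u. (\<forall>k<K. dot S u (\<phi> k) = 0) \<longrightarrow> (\<forall>i\<in>S. u i = 0))"

definition unit_orthogonal :: "'a set \<Rightarrow> nat \<Rightarrow> (nat \<Rightarrow> 'a \<Rightarrow> real) \<Rightarrow> ('a \<Rightarrow> real) set" where
  "unit_orthogonal S K \<phi> = {u. dot S u u = 1 \<and> (\<forall>k<K. dot S u (\<phi> k) = 0)}"

lemma dot_commute: "dot S u v = dot S v u"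
  unfolding dot_def by (simp add: mult.commute)

lemma dot_cong:
  "(\<And>i. i \<in> S \<Longrightarrow> u i = u' i) \<Longrightarrow> (\<And>i. i \<in> S \<Longrightarrow> v i = v' i) \<Longrightarrow> dot S u v = dot S u' v'"
  unfolding dot_def by simp

lemma dot_sum_left: "dot S (\<lambda>i. \<Sum>k\<in>F. f k i) v = (\<Sum>k\<in>F. dot S (f k) v)"
  unfolding dot_def by (simp add: sum_distrib_right sum.swap[of _ S])

lemma dot_sum_right: "dot S v (\<lambda>i. \<Sum>k\<in>F. f k i) = (\<Sum>k\<in>F. dot S v (f k))"
  using dot_sum_left[where S=S and F=F and f=f and v=v] by (simp add: dot_commute)

lemma dot_scale_left: "dot S (\<lambda>i. c * u i) v = c * dot S u v"
  unfolding dot_def by (simp add: sum_distrib_left mult.assoc)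

lemma dot_scale_right: "dot S v (\<lambda>i. c * u i) = c * dot S v u"
  unfolding dot_def by (simp add: sum_distrib_left mult.left_commute)

lemma dot_add_left: "dot S (\<lambda>i. u i + w i) v = dot S u v + dot S w v"
  unfolding dot_def by (simp add: distrib_right sum.distrib)

lemma dot_add_right: "dot S v (\<lambda>i. u i + w i) = dot S v u + dot S v w"
  unfolding dot_def by (simp add: distrib_left sum.distrib)

lemma dot_diff_left: "dot S (\<lambda>i. u i - w i) v = dot S u v - dot S w v"
  unfolding dot_def by (simp add: left_diff_distrib sum_subtractf)

lemma dot_diff_right: "dot S v (\<lambda>i. u i - w i) = dot S v u - dot S v w"
  unfolding dot_def by (simp add: right_diff_distrib sum_subtractf)

lemma dot_self_nonneg: "dot S u u \<ge> 0"
  unfolding dot_def by (simp add: sum_nonneg)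

lemma dot_self_eq_0D: "finite S \<Longrightarrow> dot S u u = 0 \<Longrightarrow> i \<in> S \<Longrightarrow> u i = 0"
  unfolding dot_def using sum_nonneg_eq_0_iff[of S "\<lambda>i. u i * u i"] by simp

lemma power2_le_dot_self: "finite S \<Longrightarrow> i \<in> S \<Longrightarrow> (u i)\<^sup>2 \<le> dot S u u"
  unfolding dot_def power2_eq_square by (rule member_le_sum) auto

lemma dot_indicator_left:
  assumes "finite S" "i \<in> S"
  shows "dot S (\<lambda>j. if j = i then 1 else 0) v = v i"
proof -
  have "dot S (\<lambda>j. if j = i then 1 else 0) v = (\<Sum>j\<in>S. if j = i then v j else 0)"
    unfolding dot_def by (rule sum.cong) auto
  then show ?thesis using assms by simp
qed

lemma dot_normalize:
  assumes "dot S u u > 0"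
  shows "dot S (\<lambda>i. u i / sqrt (dot S u u)) (\<lambda>i. u i / sqrt (dot S u u)) = 1"
  using assms unfolding dot_def by (simp add: power2_eq_square sum_divide_distrib[symmetric])

lemma dot_mat_vec_symmetric:
  assumes "symmetric_matrix S A"
  shows "dot S u (mat_vec S A v) = dot S (mat_vec S A u) v"
proof -
  have "dot S u (mat_vec S A v) = (\<Sum>i\<in>S. \<Sum>j\<in>S. u i * A i j * v j)"
    unfolding dot_def mat_vec_def by (simp add: sum_distrib_left mult.assoc)
  also have "\<dots> = (\<Sum>j\<in>S. \<Sum>i\<in>S. A j i * u i * v j)"
    using assms unfolding symmetric_matrix_def by (subst sum.swap) (auto intro!: sum.cong)
  also have "\<dots> = dot S (mat_vec S A u) v"
    unfolding dot_def mat_vec_def by (simp add: sum_distrib_right)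
  finally show ?thesis .
qed

lemma mat_vec_add_scale:
  "mat_vec S A (\<lambda>i. v i + e * w i) = (\<lambda>i. mat_vec S A v i + e * mat_vec S A w i)"
  unfolding mat_vec_def by (simp add: sum.distrib sum_distrib_left algebra_simps)

lemma dot_divide_left: "dot S (\<lambda>i. u i / c) v = dot S u v / c"
  unfolding dot_def by (simp add: sum_divide_distrib)

lemma quadratic_form_divide:
  "dot S (\<lambda>i. u i / c) (mat_vec S A (\<lambda>i. u i / c)) = dot S u (mat_vec S A u) / c\<^sup>2"
  unfolding dot_def mat_vec_def
  by (simp add: sum_divide_distrib[symmetric] sum_distrib_left power2_eq_square mult_ac)

lemma quadratic_form_add_scale:
  assumes "symmetric_matrix S A"
  shows "dot S (\<lambda>i. v i + e * w i) (mat_vec S A (\<lambda>i. v i + e * w i))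
     = dot S v (mat_vec S A v) + 2 * e * dot S w (mat_vec S A v) + e\<^sup>2 * dot S w (mat_vec S A w)"
proof -
  have "dot S v (mat_vec S A w) = dot S w (mat_vec S A v)"
    using dot_mat_vec_symmetric[OF assms, of v w] by (simp add: dot_commute)
  then show ?thesis
    by (simp add: mat_vec_add_scale dot_add_left dot_add_right dot_scale_left dot_scale_right
        power2_eq_square algebra_simps)
qed

lemma dot_orthonormal_combination:
  assumes "orthonormal_family S K \<phi>" "j < K"
  shows "dot S (\<lambda>i. \<Sum>k<K. c k * \<phi> k i) (\<phi> j) = c j"
proof -
  have "dot S (\<lambda>i. \<Sum>k<K. c k * \<phi> k i) (\<phi> j) = (\<Sum>k<K. c k * dot S (\<phi> k) (\<phi> j))"
    by (simp add: dot_sum_left dot_scale_left)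
  also have "\<dots> = (\<Sum>k<K. if k = j then c k else 0)"
    using assms unfolding orthonormal_family_def by (intro sum.cong) auto
  finally show ?thesis using assms(2) by simp
qed

lemma dot_orthonormal_residual:
  assumes "orthonormal_family S K \<phi>" "j < K"
  shows "dot S (\<lambda>i. u i - (\<Sum>k<K. dot S u (\<phi> k) * \<phi> k i)) (\<phi> j) = 0"
  using dot_orthonormal_combination[OF assms, of "\<lambda>k. dot S u (\<phi> k)"] by (simp add: dot_diff_left)

lemma bessel_inequality:
  assumes "orthonormal_family S K \<phi>"
  shows "(\<Sum>k<K. (dot S u (\<phi> k))\<^sup>2) \<le> dot S u u"
proof -
  define c where "c k = dot S u (\<phi> k)" for k
  define s where "s i = (\<Sum>k<K. c k * \<phi> k i)" for i
  define w where "w i = u i - s i" for i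
  have "dot S w (\<phi> j) = 0" if "j < K" for j
    using dot_orthonormal_residual[OF assms that, of u] unfolding w_def s_def c_def by simp
  then have sw: "dot S s w = 0"
    unfolding s_def by (simp add: dot_sum_left dot_scale_left dot_commute)
  have us: "dot S u s = (\<Sum>k<K. (c k)\<^sup>2)"
    unfolding s_def by (simp add: dot_sum_right dot_scale_right c_def power2_eq_square)
  have "dot S w w = dot S u u - (\<Sum>k<K. (c k)\<^sup>2)"
    using sw us unfolding w_def by (simp add: dot_diff_left dot_diff_right)
  then show ?thesis using dot_self_nonneg[of S w] unfolding c_def by simp
qed

lemma orthonormal_family_card_le:
  assumes "finite S" "orthonormal_family S K \<phi>"
  shows "K \<le> card S"
proof -
  have "(\<Sum>k<K. (\<phi> k i)\<^sup>2) \<le> 1" if "i \<in> S" for i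
    using bessel_inequality[OF assms(2), of "\<lambda>j. if j = i then 1 else 0"]
    by (simp add: dot_indicator_left[OF assms(1) that])
  then have "(\<Sum>i\<in>S. \<Sum>k<K. (\<phi> k i)\<^sup>2) \<le> (\<Sum>i\<in>S. 1)"
    by (rule sum_mono)
  moreover have "(\<Sum>i\<in>S. \<Sum>k<K. (\<phi> k i)\<^sup>2) = (\<Sum>k<K. dot S (\<phi> k) (\<phi> k))"
    unfolding dot_def by (subst sum.swap) (simp add: power2_eq_square)
  moreover have "(\<Sum>k<K. dot S (\<phi> k) (\<phi> k)) = K"
    using assms(2) unfolding orthonormal_family_def by simp
  ultimately show ?thesis by simp
qed

lemma bounded_functions_convergent_subseq:
  fixes x :: "nat \<Rightarrow> 'a \<Rightarrow> real"
  assumes "finite S" "\<And>n i. i \<in> S \<Longrightarrow> \<bar>x n i\<bar> \<le> B"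
  shows "\<exists>\<sigma>. strict_mono \<sigma> \<and> (\<forall>i\<in>S. convergent (\<lambda>n. x (\<sigma> n) i))"
  using assms
proof (induction S rule: finite_induct)
  case empty
  then show ?case by (intro exI[of _ id]) (auto simp: strict_mono_def)
next
  case (insert a F)
  then obtain \<sigma> where \<sigma>: "strict_mono \<sigma>" "\<forall>i\<in>F. convergent (\<lambda>n. x (\<sigma> n) i)" by auto
  obtain f where f: "strict_mono f" "monoseq (\<lambda>n. x (\<sigma> (f n)) a)"
    using seq_monosub[of "\<lambda>n. x (\<sigma> n) a"] by auto
  have "Bseq (\<lambda>n. x (\<sigma> (f n)) a)"
    using insert.prems by (intro BseqI'[of _ B]) auto
  then have "convergent (\<lambda>n. x (\<sigma> (f n)) a)"
    using f(2) Bseq_monoseq_convergent by blast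
  moreover have "convergent (\<lambda>n. x (\<sigma> (f n)) i)" if "i \<in> F" for i
  proof -
    from \<sigma>(2) that obtain L where "(\<lambda>n. x (\<sigma> n) i) \<longlonglongrightarrow> L" by (auto simp: convergent_def)
    from LIMSEQ_subseq_LIMSEQ[OF this f(1)] show ?thesis by (auto simp: convergent_def o_def)
  qed
  moreover have "strict_mono (\<sigma> \<circ> f)" using \<sigma>(1) f(1) by (simp add: strict_mono_def)
  ultimately show ?case by (intro exI[of _ "\<sigma> \<circ> f"]) (auto simp: o_def)
qed

lemma linear_quadratic_nonneg_imp_eq_0:
  fixes a b :: real
  assumes "\<And>e. 2 * e * a + e\<^sup>2 * b \<ge> 0"
  shows "a = 0"
proof (rule ccontr)
  assume "a \<noteq> 0"
  define e where "e = - a / (\<bar>b\<bar> + 1)"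
  have "e\<^sup>2 * b \<le> e\<^sup>2 * (\<bar>b\<bar> + 1)" by (intro mult_left_mono) auto
  also have "\<dots> = - e * a"
    unfolding e_def by (simp add: power2_eq_square divide_simps)
  finally have "2 * e * a + e\<^sup>2 * b \<le> e * a" by (simp add: algebra_simps)
  moreover have "e * a < 0"
    using \<open>a \<noteq> 0\<close> unfolding e_def by (simp add: field_simps add_pos_nonneg flip: power2_eq_square)
  ultimately show False using assms[of e] by (simp add: algebra_simps)
qed

lemma normalize_in_unit_orthogonal:
  assumes "dot S u u > 0" "\<forall>k<K. dot S u (\<phi> k) = 0"
  shows "(\<lambda>i. u i / sqrt (dot S u u)) \<in> unit_orthogonal S K \<phi>"
  using assms dot_normalize[OF assms(1)] unfolding unit_orthogonal_def by (simp add: dot_divide_left)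

lemma unit_orthogonal_nonempty:
  assumes "finite S" "\<not> complete_family S K \<phi>"
  shows "unit_orthogonal S K \<phi> \<noteq> {}"
proof -
  from assms(2) obtain u i where u: "\<forall>k<K. dot S u (\<phi> k) = 0" "i \<in> S" "u i \<noteq> 0"
    unfolding complete_family_def by auto
  then have "dot S u u > 0"
    using dot_self_nonneg[of S u] dot_self_eq_0D[OF assms(1), of u i] by linarith
  then show ?thesis using normalize_in_unit_orthogonal u(1) by blast
qed

lemma unit_orthogonal_coordinate_bound:
  "finite S \<Longrightarrow> u \<in> unit_orthogonal S K \<phi> \<Longrightarrow> i \<in> S \<Longrightarrow> \<bar>u i\<bar> \<le> 1"
  using power2_le_dot_self[of S i u] by (simp add: unit_orthogonal_def abs_square_le_1)

lemma quadratic_form_lower_bound: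
  assumes "\<And>i. i \<in> S \<Longrightarrow> \<bar>u i\<bar> \<le> 1"
  shows "- (\<Sum>i\<in>S. \<Sum>j\<in>S. \<bar>A i j\<bar>) \<le> dot S u (mat_vec S A u)"
proof -
  have "\<bar>dot S u (mat_vec S A u)\<bar> \<le> (\<Sum>i\<in>S. \<Sum>j\<in>S. \<bar>u i * A i j * u j\<bar>)"
    unfolding dot_def mat_vec_def sum_distrib_left mult.assoc[symmetric]
    by (rule order_trans[OF sum_abs sum_mono]) (rule sum_abs)
  also have "\<dots> \<le> (\<Sum>i\<in>S. \<Sum>j\<in>S. \<bar>A i j\<bar>)"
  proof (intro sum_mono)
    fix i j assume "i \<in> S" "j \<in> S"
    then have "\<bar>u i\<bar> * \<bar>u j\<bar> \<le> 1" using assms by (simp add: mult_le_one)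
    then show "\<bar>u i * A i j * u j\<bar> \<le> \<bar>A i j\<bar>"
      using mult_right_mono[of "\<bar>u i\<bar> * \<bar>u j\<bar>" 1 "\<bar>A i j\<bar>"] by (simp add: abs_mult algebra_simps)
  qed
  finally show ?thesis by linarith
qed

lemma unit_orthogonal_closed:
  assumes "\<And>n. x n \<in> unit_orthogonal S K \<phi>" "\<And>i. i \<in> S \<Longrightarrow> (\<lambda>n. x n i) \<longlonglongrightarrow> v i"
  shows "v \<in> unit_orthogonal S K \<phi>"
proof -
  have "(\<lambda>n. dot S (x n) (x n)) \<longlonglongrightarrow> dot S v v"
    unfolding dot_def by (intro tendsto_sum tendsto_mult assms(2))
  moreover have "(\<lambda>n. dot S (x n) (x n)) = (\<lambda>n. 1)"
    using assms(1) by (simp add: unit_orthogonal_def)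
  ultimately have "dot S v v = 1" by (simp add: LIMSEQ_const_iff)
  moreover have "dot S v (\<phi> k) = 0" if "k < K" for k
  proof -
    have "(\<lambda>n. dot S (x n) (\<phi> k)) \<longlonglongrightarrow> dot S v (\<phi> k)"
      unfolding dot_def by (intro tendsto_sum tendsto_mult assms(2) tendsto_const)
    moreover have "(\<lambda>n. dot S (x n) (\<phi> k)) = (\<lambda>n. 0)"
      using assms(1) that by (simp add: unit_orthogonal_def)
    ultimately show ?thesis by (simp add: LIMSEQ_const_iff)
  qed
  ultimately show ?thesis unfolding unit_orthogonal_def by blast
qed

lemma quadratic_form_attains_min_on_unit_orthogonal:
  assumes fin: "finite S" and incomplete: "\<not> complete_family S K \<phi>"
  shows "\<exists>v\<in>unit_orthogonal S K \<phi>. \<forall>u\<in>unit_orthogonal S K \<phi>.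
           dot S v (mat_vec S A v) \<le> dot S u (mat_vec S A u)"
proof -
  let ?C = "unit_orthogonal S K \<phi>"
  define q where "q u = dot S u (mat_vec S A u)" for u
  have "- (\<Sum>i\<in>S. \<Sum>j\<in>S. \<bar>A i j\<bar>) \<le> q u" if "u \<in> ?C" for u
    unfolding q_def by (rule quadratic_form_lower_bound) (rule unit_orthogonal_coordinate_bound[OF fin that])
  then have bdd: "bdd_below (q ` ?C)" by (intro bdd_belowI) auto
  define m where "m = Inf (q ` ?C)"
  have m_le: "m \<le> q u" if "u \<in> ?C" for u
    unfolding m_def using bdd that by (simp add: cInf_lower)
  have "m \<in> closure (q ` ?C)"
    unfolding m_def using unit_orthogonal_nonempty[OF assms] bdd by (intro closure_contains_Inf) auto
  then obtain y where y: "\<And>n. y n \<in> q ` ?C" "y \<longlonglongrightarrow> m"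
    unfolding closure_sequential by blast
  then have "\<forall>n. \<exists>u. u \<in> ?C \<and> y n = q u" by blast
  then obtain x where x: "\<And>n. x n \<in> ?C" and y_eq: "\<And>n. y n = q (x n)" by metis
  obtain \<sigma> where \<sigma>: "strict_mono \<sigma>" "\<forall>i\<in>S. convergent (\<lambda>n. x (\<sigma> n) i)"
    using bounded_functions_convergent_subseq[OF fin, of x 1] unit_orthogonal_coordinate_bound[OF fin] x
    by blast
  define v where "v i = lim (\<lambda>n. x (\<sigma> n) i)" for i
  have lim_v: "(\<lambda>n. x (\<sigma> n) i) \<longlonglongrightarrow> v i" if "i \<in> S" for i
    using \<sigma>(2) that unfolding v_def by (simp add: convergent_LIMSEQ_iff)
  have "(\<lambda>n. q (x (\<sigma> n))) \<longlonglongrightarrow> q v"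
    unfolding q_def dot_def mat_vec_def by (intro tendsto_sum tendsto_mult lim_v tendsto_const)
  moreover have "(\<lambda>n. q (x (\<sigma> n))) \<longlonglongrightarrow> m"
    using LIMSEQ_subseq_LIMSEQ[OF y(2) \<sigma>(1)] by (simp add: o_def y_eq)
  ultimately have "q v = m" by (rule LIMSEQ_unique)
  moreover have "v \<in> ?C" using unit_orthogonal_closed[OF x lim_v] .
  ultimately show ?thesis using m_le unfolding q_def by auto
qed

lemma unit_orthogonal_minimiser_first_variation:
  assumes sym: "symmetric_matrix S A" and v: "v \<in> unit_orthogonal S K \<phi>"
    and min: "\<And>u. u \<in> unit_orthogonal S K \<phi> \<Longrightarrow> dot S v (mat_vec S A v) \<le> dot S u (mat_vec S A u)"
    and w_orth: "\<forall>k<K. dot S w (\<phi> k) = 0" and wv: "dot S w v = 0"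
  shows "dot S w (mat_vec S A v) = 0"
proof (rule linear_quadratic_nonneg_imp_eq_0)
  fix e :: real
  define m where "m = dot S v (mat_vec S A v)"
  define u where "u i = v i + e * w i" for i
  have "dot S v v = 1" and v_orth: "\<And>k. k < K \<Longrightarrow> dot S v (\<phi> k) = 0"
    using v by (auto simp: unit_orthogonal_def)
  then have uu: "dot S u u = 1 + e\<^sup>2 * dot S w w"
    unfolding u_def using wv
    by (simp add: dot_add_left dot_add_right dot_scale_left dot_scale_right dot_commute[of S v w]
        power2_eq_square)
  then have uu_pos: "dot S u u > 0"
    using dot_self_nonneg[of S w] by (simp add: add_pos_nonneg)
  have "\<forall>k<K. dot S u (\<phi> k) = 0"
    unfolding u_def using v_orth w_orth by (simp add: dot_add_left dot_scale_left)
  then have "m \<le> dot S u (mat_vec S A u) / dot S u u"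
    using min[OF normalize_in_unit_orthogonal[OF uu_pos]] uu_pos
    by (simp add: m_def quadratic_form_divide)
  then have "m * dot S u u \<le> dot S u (mat_vec S A u)"
    using uu_pos by (simp add: pos_le_divide_eq)
  moreover have "dot S u (mat_vec S A u)
      = m + 2 * e * dot S w (mat_vec S A v) + e\<^sup>2 * dot S w (mat_vec S A w)"
    unfolding u_def m_def by (rule quadratic_form_add_scale[OF sym])
  ultimately show "0 \<le> 2 * e * dot S w (mat_vec S A v) + e\<^sup>2 * (dot S w (mat_vec S A w) - m * dot S w w)"
    using uu by (simp add: algebra_simps)
qed

lemma unit_orthogonal_minimiser_eigenvector:
  assumes fin: "finite S" and sym: "symmetric_matrix S A" and eig: "eigen_family S A K \<phi> \<mu>"
    and v: "v \<in> unit_orthogonal S K \<phi>"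
    and min: "\<And>u. u \<in> unit_orthogonal S K \<phi> \<Longrightarrow> dot S v (mat_vec S A v) \<le> dot S u (mat_vec S A u)"
    and i: "i \<in> S"
  shows "mat_vec S A v i = dot S v (mat_vec S A v) * v i"
proof -
  define m where "m = dot S v (mat_vec S A v)"
  define w where "w i = mat_vec S A v i - m * v i" for i
  have vv: "dot S v v = 1" and v_orth: "\<And>k. k < K \<Longrightarrow> dot S v (\<phi> k) = 0"
    using v by (auto simp: unit_orthogonal_def)
  have "dot S (mat_vec S A v) (\<phi> k) = 0" if "k < K" for k
  proof -
    have "dot S (mat_vec S A v) (\<phi> k) = dot S v (mat_vec S A (\<phi> k))"
      using dot_mat_vec_symmetric[OF sym] by simp
    also have "\<dots> = dot S v (\<lambda>i. \<mu> k * \<phi> k i)"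
      using eig that unfolding eigen_family_def by (intro dot_cong) auto
    finally show ?thesis using v_orth[OF that] by (simp add: dot_scale_right)
  qed
  then have w_orth: "\<forall>k<K. dot S w (\<phi> k) = 0"
    unfolding w_def using v_orth by (simp add: dot_diff_left dot_scale_left)
  have wv: "dot S w v = 0"
    unfolding w_def using vv by (simp add: dot_diff_left dot_scale_left dot_commute m_def)
  have "dot S w (mat_vec S A v) = 0"
    using unit_orthogonal_minimiser_first_variation[OF sym v min w_orth wv] .
  then have "dot S w w = 0"
    using wv unfolding w_def by (simp add: dot_diff_right dot_scale_right)
  then have "w i = 0" using dot_self_eq_0D[OF fin _ i] by blast
  then show ?thesis unfolding w_def m_def by simp
qed

lemma symmetric_matrix_eigenbasis:
  assumes fin: "finite S" and sym: "symmetric_matrix S A"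
  shows "\<exists>K \<phi> \<mu>. orthonormal_family S K \<phi> \<and> eigen_family S A K \<phi> \<mu> \<and> complete_family S K \<phi>"
proof (rule ccontr)
  assume none: "\<nexists>K \<phi> \<mu>. orthonormal_family S K \<phi> \<and> eigen_family S A K \<phi> \<mu> \<and> complete_family S K \<phi>"
  have "\<exists>\<phi> \<mu>. orthonormal_family S k \<phi> \<and> eigen_family S A k \<phi> \<mu>" for k
  proof (induction k)
    case 0
    show ?case by (simp add: orthonormal_family_def eigen_family_def)
  next
    case (Suc k)
    then obtain \<phi> \<mu> where orth: "orthonormal_family S k \<phi>" and eig: "eigen_family S A k \<phi> \<mu>"
      by blast
    then have "\<not> complete_family S k \<phi>" using none by blast
    then obtain v where v: "v \<in> unit_orthogonal S k \<phi>"
      and min: "\<forall>u\<in>unit_orthogonal S k \<phi>. dot S v (mat_vec S A v) \<le> dot S u (mat_vec S A u)"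
      using quadratic_form_attains_min_on_unit_orthogonal[OF fin] by blast
    have v_unit: "dot S v v = 1" and v_orth: "\<And>j. j < k \<Longrightarrow> dot S v (\<phi> j) = 0"
      using v unfolding unit_orthogonal_def by auto
    have v_orth': "\<And>j. j < k \<Longrightarrow> dot S (\<phi> j) v = 0"
      using v_orth dot_commute by metis
    have "orthonormal_family S (Suc k) (\<phi>(k := v))"
      unfolding orthonormal_family_def
    proof (intro allI impI)
      fix j l assume "j < Suc k" "l < Suc k"
      then show "dot S ((\<phi>(k := v)) j) ((\<phi>(k := v)) l) = (if j = l then 1 else 0)"
        using orth v_unit v_orth v_orth' unfolding orthonormal_family_def
        by (cases "j = k"; cases "l = k") auto
    qed
    moreover have "mat_vec S A v i = dot S v (mat_vec S A v) * v i" if "i \<in> S" for i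
      using unit_orthogonal_minimiser_eigenvector[OF fin sym eig v _ that] min by blast
    then have "eigen_family S A (Suc k) (\<phi>(k := v)) (\<mu>(k := dot S v (mat_vec S A v)))"
      using eig unfolding eigen_family_def by (auto simp: less_Suc_eq)
    ultimately show ?case by blast
  qed
  then obtain \<phi> where "orthonormal_family S (Suc (card S)) \<phi>" by blast
  then show False using orthonormal_family_card_le[OF fin] by fastforce
qed

locale eigenbasis =
  fixes S :: "'a set" and A :: "'a \<Rightarrow> 'a \<Rightarrow> real" and K :: nat
    and \<phi> :: "nat \<Rightarrow> 'a \<Rightarrow> real" and \<mu> :: "nat \<Rightarrow> real"
  assumes finite: "finite S" and symmetric: "symmetric_matrix S A"
    and orthonormal: "orthonormal_family S K \<phi>" and eigen: "eigen_family S A K \<phi> \<mu>"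
    and complete: "complete_family S K \<phi>"
begin

lemma eigenvector: "k < K \<Longrightarrow> i \<in> S \<Longrightarrow> mat_vec S A (\<phi> k) i = \<mu> k * \<phi> k i"
  using eigen unfolding eigen_family_def by auto

lemma dot_eigenvector: "j < K \<Longrightarrow> k < K \<Longrightarrow> dot S (\<phi> j) (\<phi> k) = (if j = k then 1 else 0)"
  using orthonormal unfolding orthonormal_family_def by auto

lemma eigen_expansion: "i \<in> S \<Longrightarrow> u i = (\<Sum>k<K. dot S u (\<phi> k) * \<phi> k i)"
  using complete dot_orthonormal_residual[OF orthonormal _, of _ u] unfolding complete_family_def
  by fastforce

lemma eigenvectors_resolve_identity:
  "i \<in> S \<Longrightarrow> j \<in> S \<Longrightarrow> (\<Sum>k<K. \<phi> k i * \<phi> k j) = (if i = j then 1 else 0)"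
  using eigen_expansion[of j "\<lambda>j. if j = i then 1 else 0"] dot_indicator_left[OF finite]
  by (auto simp: eq_commute)

lemma parseval: "dot S u v = (\<Sum>k<K. dot S u (\<phi> k) * dot S v (\<phi> k))"
proof -
  have "dot S u v = dot S u (\<lambda>i. \<Sum>k<K. dot S v (\<phi> k) * \<phi> k i)"
    using eigen_expansion by (intro dot_cong) auto
  also have "\<dots> = (\<Sum>k<K. dot S v (\<phi> k) * dot S u (\<phi> k))"
    by (simp add: dot_sum_right dot_scale_right)
  finally show ?thesis by (simp add: mult.commute)
qed

lemma dot_mat_vec_eigenvector: "k < K \<Longrightarrow> dot S (mat_vec S A u) (\<phi> k) = \<mu> k * dot S u (\<phi> k)"
proof -
  assume k: "k < K"
  have "dot S (mat_vec S A u) (\<phi> k) = dot S u (mat_vec S A (\<phi> k))"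
    using dot_mat_vec_symmetric[OF symmetric] by simp
  also have "\<dots> = dot S u (\<lambda>i. \<mu> k * \<phi> k i)"
    using eigenvector[OF k] by (intro dot_cong) auto
  finally show ?thesis by (simp add: dot_scale_right)
qed

lemma quadratic_form_eigen: "dot S u (mat_vec S A u) = (\<Sum>k<K. \<mu> k * (dot S u (\<phi> k))\<^sup>2)"
  using parseval[of u "mat_vec S A u"] dot_mat_vec_eigenvector
  by (simp add: power2_eq_square mult_ac)

lemma eigenvalue_eq_quadratic_form: "k < K \<Longrightarrow> \<mu> k = dot S (\<phi> k) (mat_vec S A (\<phi> k))"
  using dot_mat_vec_eigenvector[of k "\<phi> k"] dot_eigenvector[of k k] by (simp add: dot_commute)

lemma mat_pow_eigen:
  "i \<in> S \<Longrightarrow> j \<in> S \<Longrightarrow> mat_pow S A m i j = (\<Sum>k<K. \<mu> k ^ m * \<phi> k i * \<phi> k j)"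
proof (induction m arbitrary: j)
  case 0
  then show ?case using eigenvectors_resolve_identity by simp
next
  case (Suc m)
  have "mat_pow S A (Suc m) i j = (\<Sum>l\<in>S. \<Sum>k<K. \<mu> k ^ m * \<phi> k i * (A j l * \<phi> k l))"
    using Suc symmetric unfolding symmetric_matrix_def
    by (auto simp: sum_distrib_right sum_distrib_left mult_ac intro!: sum.cong)
  also have "\<dots> = (\<Sum>k<K. \<mu> k ^ m * \<phi> k i * mat_vec S A (\<phi> k) j)"
    unfolding mat_vec_def by (subst sum.swap) (simp add: sum_distrib_left)
  also have "\<dots> = (\<Sum>k<K. \<mu> k ^ Suc m * \<phi> k i * \<phi> k j)"
    using eigenvector Suc.prems by (intro sum.cong) auto
  finally show ?case .
qed

lemma mat_exp_eigen:
  assumes "i \<in> S" "j \<in> S"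
  shows "mat_exp S A t i j = (\<Sum>k<K. exp (\<mu> k * t) * \<phi> k i * \<phi> k j)"
proof -
  have "(\<lambda>n. (\<mu> k * t) ^ n / fact n * (\<phi> k i * \<phi> k j)) sums (exp (\<mu> k * t) * (\<phi> k i * \<phi> k j))"
    for k
    using exp_converges[of "\<mu> k * t"] by (intro sums_mult2) (simp add: divide_inverse mult.commute)
  then have "(\<lambda>n. \<Sum>k<K. (\<mu> k * t) ^ n / fact n * (\<phi> k i * \<phi> k j))
      sums (\<Sum>k<K. exp (\<mu> k * t) * (\<phi> k i * \<phi> k j))"
    by (rule sums_sum)
  moreover have "(\<lambda>n. \<Sum>k<K. (\<mu> k * t) ^ n / fact n * (\<phi> k i * \<phi> k j))
      = (\<lambda>n. t ^ n / fact n * mat_pow S A n i j)"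
    using mat_pow_eigen[OF assms] by (simp add: sum_distrib_left power_mult_distrib mult_ac)
  ultimately show ?thesis unfolding mat_exp_def by (simp add: sums_iff mult_ac)
qed

end

section \<open>Reversible chains: Dirichlet form and spectral gap\<close>

lemma sum_power2_diff_const:
  fixes f :: "'a \<Rightarrow> real" and c :: real
  assumes "finite V"
  shows "(\<Sum>i\<in>V. (f i - c)\<^sup>2) = (\<Sum>i\<in>V. (f i)\<^sup>2) - 2 * c * (\<Sum>i\<in>V. f i) + card V * c\<^sup>2"
proof -
  have "(\<Sum>i\<in>V. (f i - c)\<^sup>2) = (\<Sum>i\<in>V. (f i)\<^sup>2 - 2 * c * f i + c\<^sup>2)"
    by (simp add: power2_eq_square algebra_simps)
  then show ?thesis by (simp add: sum.distrib sum_subtractf sum_distrib_left)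
qed

lemma sum_power2_diff_mean:
  fixes f :: "'a \<Rightarrow> real"
  assumes "finite V" "V \<noteq> {}"
  shows "(\<Sum>i\<in>V. (f i - (\<Sum>j\<in>V. f j) / card V)\<^sup>2) = (\<Sum>i\<in>V. (f i)\<^sup>2) - (\<Sum>i\<in>V. f i)\<^sup>2 / card V"
proof -
  let ?m = "(\<Sum>j\<in>V. f j) / card V"
  have "real (card V) > 0" using assms by (simp add: card_gt_0_iff)
  moreover have "(\<Sum>i\<in>V. (f i - ?m)\<^sup>2) = (\<Sum>i\<in>V. (f i)\<^sup>2) - 2 * ?m * (\<Sum>i\<in>V. f i) + card V * ?m\<^sup>2"
    by (rule sum_power2_diff_const[OF assms(1)])
  ultimately show ?thesis by (simp add: power2_eq_square field_simps)
qed

lemma mult_exp_neg_le: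
  fixes x t :: real
  assumes "t > 0"
  shows "x * exp (- x * t) \<le> 1 / t"
proof -
  have "x * t \<le> exp (x * t)" using exp_ge_add_one_self[of "x * t"] by linarith
  then show ?thesis using assms by (simp add: exp_minus field_simps)
qed

text \<open>Row-centre \<open>w\<close>, then apply Cauchy-Schwarz to the column sums of the centred matrix.\<close>

lemma sum_row_col_power2_le:
  fixes w :: "'a \<times> 'a \<Rightarrow> real"
  assumes fin: "finite V" and ne: "V \<noteq> {}"
  shows "(\<Sum>x\<in>V. (\<Sum>y\<in>V. w (x, y))\<^sup>2) / card V + (\<Sum>y\<in>V. (\<Sum>x\<in>V. w (x, y))\<^sup>2) / card V
     \<le> (\<Sum>x\<in>V. \<Sum>y\<in>V. (w (x, y))\<^sup>2) + (\<Sum>x\<in>V. \<Sum>y\<in>V. w (x, y))\<^sup>2 / (real (card V))\<^sup>2"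
proof -
  define N where "N = real (card V)"
  have N: "N > 0" using fin ne unfolding N_def by (simp add: card_gt_0_iff)
  define R where "R x = (\<Sum>y\<in>V. w (x, y))" for x
  define C where "C y = (\<Sum>x\<in>V. w (x, y))" for y
  define T where "T = (\<Sum>x\<in>V. \<Sum>y\<in>V. w (x, y))"
  define u where "u x y = w (x, y) - R x / N" for x y
  have "(\<Sum>x\<in>V. u x y) = C y - T / N" for y
    unfolding u_def C_def T_def R_def by (simp add: sum_subtractf sum_divide_distrib)
  then have "(C y - T / N)\<^sup>2 / N \<le> (\<Sum>x\<in>V. (u x y)\<^sup>2)" for y
    using sum_squared_le_sum_of_squares[where f="\<lambda>x. u x y" and I=V] N unfolding N_def
    by (simp add: divide_le_eq)
  then have "(\<Sum>y\<in>V. (C y - T / N)\<^sup>2 / N) \<le> (\<Sum>y\<in>V. \<Sum>x\<in>V. (u x y)\<^sup>2)"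
    by (rule sum_mono)
  also have "\<dots> = (\<Sum>x\<in>V. \<Sum>y\<in>V. (u x y)\<^sup>2)"
    by (rule sum.swap)
  also have "\<dots> = (\<Sum>x\<in>V. \<Sum>y\<in>V. (w (x, y))\<^sup>2) - (\<Sum>x\<in>V. (R x)\<^sup>2) / N"
    using sum_power2_diff_mean[OF fin ne, of "\<lambda>y. w (x, y)" for x]
    unfolding u_def R_def N_def by (simp add: sum_subtractf sum_divide_distrib)
  finally have rows: "(\<Sum>y\<in>V. (C y - T / N)\<^sup>2) / N
      \<le> (\<Sum>x\<in>V. \<Sum>y\<in>V. (w (x, y))\<^sup>2) - (\<Sum>x\<in>V. (R x)\<^sup>2) / N"
    by (simp add: sum_divide_distrib)
  have "(\<Sum>y\<in>V. (C y - T / N)\<^sup>2) = (\<Sum>y\<in>V. (C y)\<^sup>2) - T\<^sup>2 / N"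
    using sum_power2_diff_mean[OF fin ne, of C] sum.swap[of "\<lambda>x y. w (x, y)" V V]
    unfolding C_def T_def N_def by simp
  with rows have "(\<Sum>y\<in>V. (C y)\<^sup>2) / N - T\<^sup>2 / N\<^sup>2
      \<le> (\<Sum>x\<in>V. \<Sum>y\<in>V. (w (x, y))\<^sup>2) - (\<Sum>x\<in>V. (R x)\<^sup>2) / N"
    using N by (simp add: diff_divide_distrib power2_eq_square)
  then show ?thesis unfolding N_def R_def C_def T_def by linarith
qed

text \<open>For unit total rates \<open>laplacian r\<close> is the negated generator matrix \<open>-Q\<close>.\<close>

definition laplacian :: "('a \<Rightarrow> 'a \<Rightarrow> real) \<Rightarrow> 'a \<Rightarrow> 'a \<Rightarrow> real" where
  "laplacian r x y = (if x = y then 1 else 0) - r x y"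

definition dirichlet_form :: "'a set \<Rightarrow> ('a \<Rightarrow> 'a \<Rightarrow> real) \<Rightarrow> ('a \<Rightarrow> real) \<Rightarrow> real" where
  "dirichlet_form V r g = dot V g (mat_vec V (laplacian r) g)"

locale unit_rate_chain =
  fixes V :: "'a set" and r :: "'a \<Rightarrow> 'a \<Rightarrow> real"
  assumes finite_V: "finite V" and card_V: "card V \<ge> 2"
    and rate_nonneg: "\<And>x y. x \<in> V \<Longrightarrow> y \<in> V \<Longrightarrow> r x y \<ge> 0"
    and rate_diag: "\<And>x. x \<in> V \<Longrightarrow> r x x = 0"
    and rate_sym: "\<And>x y. x \<in> V \<Longrightarrow> y \<in> V \<Longrightarrow> r x y = r y x"
    and total_rate_1: "\<And>x. x \<in> V \<Longrightarrow> (\<Sum>y\<in>V. r x y) = 1"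
    and irreducible: "irreducible_chain V r"
begin

lemma V_nonempty: "V \<noteq> {}"
  using card_V by auto

lemma card_V_pos: "real (card V) > 0"
  using finite_V V_nonempty by (simp add: card_gt_0_iff)

lemma two_states: obtains x y where "x \<in> V" "y \<in> V" "x \<noteq> y"
proof -
  have "\<not> card V \<le> Suc 0" using card_V by simp
  then show ?thesis using card_le_Suc0_iff_eq[OF finite_V] that by blast
qed

lemma mat_vec_laplacian:
  assumes "x \<in> V"
  shows "mat_vec V (laplacian r) g x = g x - (\<Sum>y\<in>V. r x y * g y)"
proof -
  have "mat_vec V (laplacian r) g x = (\<Sum>y\<in>V. (if x = y then g y else 0) - r x y * g y)"
    unfolding mat_vec_def laplacian_def by (intro sum.cong refl) (simp add: left_diff_distrib)
  then show ?thesis using assms finite_V by (simp add: sum_subtractf)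
qed

lemma generator_eq_laplacian: "x \<in> V \<Longrightarrow> - generator V r f x = mat_vec V (laplacian r) f x"
  using total_rate_1 mat_vec_laplacian unfolding generator_def
  by (simp add: right_diff_distrib sum_subtractf flip: sum_distrib_right)

lemma symmetric_laplacian: "symmetric_matrix V (laplacian r)"
  unfolding symmetric_matrix_def laplacian_def using rate_sym by auto

lemma dirichlet_form_eq_sum_edges:
  "2 * dirichlet_form V r g = (\<Sum>x\<in>V. \<Sum>y\<in>V. r x y * (g x - g y)\<^sup>2)"
proof -
  have "dirichlet_form V r g = (\<Sum>x\<in>V. \<Sum>y\<in>V. r x y * (g x * g x - g x * g y))"
    unfolding dirichlet_form_def dot_def using total_rate_1
    by (intro sum.cong refl)
      (simp add: mat_vec_laplacian right_diff_distrib sum_subtractf sum_distrib_left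
        flip: sum_distrib_right, simp add: mult_ac)
  moreover have "\<dots> = (\<Sum>x\<in>V. \<Sum>y\<in>V. r x y * (g y * g y - g x * g y))"
    using rate_sym by (subst sum.swap) (auto intro!: sum.cong simp: mult_ac)
  ultimately have "2 * dirichlet_form V r g
      = (\<Sum>x\<in>V. \<Sum>y\<in>V. r x y * (g x * g x - g x * g y) + r x y * (g y * g y - g x * g y))"
    by (simp add: sum.distrib)
  also have "\<dots> = (\<Sum>x\<in>V. \<Sum>y\<in>V. r x y * (g x - g y)\<^sup>2)"
    by (simp add: power2_eq_square algebra_simps)
  finally show ?thesis .
qed

lemma dirichlet_form_nonneg: "dirichlet_form V r g \<ge> 0"
proof -
  have "(\<Sum>x\<in>V. \<Sum>y\<in>V. r x y * (g x - g y)\<^sup>2) \<ge> 0"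
    by (intro sum_nonneg mult_nonneg_nonneg) (auto simp: rate_nonneg)
  then show ?thesis using dirichlet_form_eq_sum_edges[of g] by simp
qed

lemma dirichlet_form_add_const: "dirichlet_form V r (\<lambda>x. g x + c) = dirichlet_form V r g"
  using dirichlet_form_eq_sum_edges[of g] dirichlet_form_eq_sum_edges[of "\<lambda>x. g x + c"] by simp

lemma dirichlet_form_eq_0_imp_const:
  assumes "dirichlet_form V r g = 0" "x \<in> V" "y \<in> V"
  shows "g x = g y"
proof -
  have terms_nonneg: "\<And>a b. a \<in> V \<Longrightarrow> b \<in> V \<Longrightarrow> r a b * (g a - g b)\<^sup>2 \<ge> 0"
    by (simp add: rate_nonneg)
  have edge: "g a = g b" if "a \<in> V" "b \<in> V" "r a b > 0" for a b
  proof -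
    have "(\<Sum>x\<in>V. \<Sum>y\<in>V. r x y * (g x - g y)\<^sup>2) = 0"
      using dirichlet_form_eq_sum_edges[of g] assms(1) by simp
    then have "r a b * (g a - g b)\<^sup>2 = 0"
      using that terms_nonneg finite_V by (simp add: sum_nonneg sum_nonneg_eq_0_iff) force
    then show ?thesis using that(3) by simp
  qed
  from irreducible assms(2,3) have "(x, y) \<in> {(a, b). a \<in> V \<and> b \<in> V \<and> r a b > 0}\<^sup>*"
    unfolding irreducible_chain_def by auto
  then show ?thesis
    by (induction rule: rtrancl_induct) (auto dest: edge)
qed

end

locale laplacian_eigenbasis =
  unit_rate_chain V r + eigenbasis V "laplacian r" K \<phi> \<mu>
  for V :: "'a set" and r K \<phi> \<mu>
begin

lemma eigenvalue_nonneg: "k < K \<Longrightarrow> \<mu> k \<ge> 0"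
  using eigenvalue_eq_quadratic_form dirichlet_form_nonneg unfolding dirichlet_form_def by simp

lemma eigenvalue_0_imp_const:
  assumes "k < K" "\<mu> k = 0" "x \<in> V" "y \<in> V"
  shows "\<phi> k x = \<phi> k y"
proof (rule dirichlet_form_eq_0_imp_const)
  show "dirichlet_form V r (\<phi> k) = 0"
    using eigenvalue_eq_quadratic_form[OF assms(1)] assms(2) by (simp add: dirichlet_form_def)
qed (use assms in auto)

lemma positive_eigenvalue_exists: "\<exists>k<K. \<mu> k > 0"
proof (rule ccontr)
  assume none: "\<not> (\<exists>k<K. \<mu> k > 0)"
  have zero: "\<mu> k = 0" if "k < K" for k
  proof -
    have "\<not> \<mu> k > 0" using none that by blast
    then show ?thesis using eigenvalue_nonneg[OF that] by linarith
  qed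
  obtain x y where xy: "x \<in> V" "y \<in> V" "x \<noteq> y" by (rule two_states)
  have "\<phi> k y = \<phi> k x" if "k < K" for k
    using eigenvalue_0_imp_const[OF that zero[OF that] xy(2) xy(1)] .
  then have "(\<Sum>k<K. \<phi> k x * \<phi> k y) = (\<Sum>k<K. \<phi> k x * \<phi> k x)" by simp
  then show False using eigenvectors_resolve_identity[of x y] eigenvectors_resolve_identity[of x x] xy
    by simp
qed

lemma positive_spectrum:
  "{m. m > 0 \<and> (\<exists>f. (\<exists>x\<in>V. f x \<noteq> 0) \<and> (\<forall>x\<in>V. - generator V r f x = m * f x))}
     = \<mu> ` {k. k < K \<and> \<mu> k > 0}"
proof (intro equalityI subsetI)
  fix m assume "m \<in> {m. m > 0 \<and> (\<exists>f. (\<exists>x\<in>V. f x \<noteq> 0) \<and> (\<forall>x\<in>V. - generator V r f x = m * f x))}"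
  then obtain f where m: "m > 0" and f: "\<exists>x\<in>V. f x \<noteq> 0" "\<forall>x\<in>V. mat_vec V (laplacian r) f x = m * f x"
    using generator_eq_laplacian by auto
  from f(1) complete obtain k where k: "k < K" "dot V f (\<phi> k) \<noteq> 0"
    unfolding complete_family_def by blast
  have "dot V (mat_vec V (laplacian r) f) (\<phi> k) = dot V (\<lambda>x. m * f x) (\<phi> k)"
    using f(2) by (intro dot_cong) auto
  then have "\<mu> k * dot V f (\<phi> k) = m * dot V f (\<phi> k)"
    using dot_mat_vec_eigenvector[OF k(1)] by (simp add: dot_scale_left)
  then show "m \<in> \<mu> ` {k. k < K \<and> \<mu> k > 0}" using k m by auto
next
  fix m assume "m \<in> \<mu> ` {k. k < K \<and> \<mu> k > 0}"
  then obtain k where k: "k < K" "\<mu> k > 0" "m = \<mu> k" by auto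
  have "\<exists>x\<in>V. \<phi> k x \<noteq> 0"
  proof (rule ccontr)
    assume "\<not> (\<exists>x\<in>V. \<phi> k x \<noteq> 0)"
    then have "dot V (\<phi> k) (\<phi> k) = 0" unfolding dot_def by simp
    then show False using dot_eigenvector[OF k(1) k(1)] by simp
  qed
  then show "m \<in> {m. m > 0 \<and> (\<exists>f. (\<exists>x\<in>V. f x \<noteq> 0) \<and> (\<forall>x\<in>V. - generator V r f x = m * f x))}"
    using k generator_eq_laplacian eigenvector[OF k(1)] by auto
qed

lemma spectral_gap_eq_Min: "spectral_gap V r = Min (\<mu> ` {k. k < K \<and> \<mu> k > 0})"
  unfolding spectral_gap_def positive_spectrum
  using positive_eigenvalue_exists by (intro cInf_eq_Min) auto

lemma spectral_gap_le_eigenvalue: "k < K \<Longrightarrow> \<mu> k > 0 \<Longrightarrow> spectral_gap V r \<le> \<mu> k"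
  unfolding spectral_gap_eq_Min by (intro Min_le) auto

lemma poincare_centered:
  assumes "(\<Sum>x\<in>V. g x) = 0"
  shows "spectral_gap V r * dot V g g \<le> dirichlet_form V r g"
proof -
  have "spectral_gap V r * (dot V g (\<phi> k))\<^sup>2 \<le> \<mu> k * (dot V g (\<phi> k))\<^sup>2" if k: "k < K" for k
  proof (cases "\<mu> k > 0")
    case True
    then show ?thesis using spectral_gap_le_eigenvalue[OF k] by (simp add: mult_right_mono)
  next
    case False
    then have "\<mu> k = 0" using eigenvalue_nonneg[OF k] by simp
    obtain x0 where x0: "x0 \<in> V" using V_nonempty by auto
    have "dot V g (\<phi> k) = dot V g (\<lambda>x. \<phi> k x0 * 1)"
      using eigenvalue_0_imp_const[OF k \<open>\<mu> k = 0\<close> _ x0] by (intro dot_cong) auto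
    also have "\<dots> = 0" using assms unfolding dot_def by (simp flip: sum_distrib_right)
    finally show ?thesis by simp
  qed
  then have "(\<Sum>k<K. spectral_gap V r * (dot V g (\<phi> k))\<^sup>2) \<le> (\<Sum>k<K. \<mu> k * (dot V g (\<phi> k))\<^sup>2)"
    by (intro sum_mono) auto
  then show ?thesis
    using parseval[of g g]
    by (simp add: dirichlet_form_def quadratic_form_eigen sum_distrib_left power2_eq_square)
qed

end

context unit_rate_chain
begin

lemma laplacian_eigenbasis: obtains K \<phi> \<mu> where "laplacian_eigenbasis V r K \<phi> \<mu>"
proof -
  obtain K \<phi> \<mu> where "orthonormal_family V K \<phi>" "eigen_family V (laplacian r) K \<phi> \<mu>"
      "complete_family V K \<phi>"
    using symmetric_matrix_eigenbasis[OF finite_V symmetric_laplacian] by blast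
  then have "laplacian_eigenbasis V r K \<phi> \<mu>"
    by (intro laplacian_eigenbasis.intro unit_rate_chain_axioms eigenbasis.intro finite_V
        symmetric_laplacian)
  then show ?thesis by (rule that)
qed

lemma spectral_gap_pos: "spectral_gap V r > 0"
proof -
  obtain K \<phi> \<mu> where "laplacian_eigenbasis V r K \<phi> \<mu>" by (rule laplacian_eigenbasis)
  then interpret laplacian_eigenbasis V r K \<phi> \<mu> .
  show ?thesis unfolding spectral_gap_eq_Min using positive_eigenvalue_exists by (subst Min_gr_iff) auto
qed

lemma poincare_inequality:
  "spectral_gap V r * (dot V g g - (\<Sum>x\<in>V. g x)\<^sup>2 / card V) \<le> dirichlet_form V r g"
proof -
  define g0 where "g0 x = g x + - (\<Sum>y\<in>V. g y) / card V" for x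
  obtain K \<phi> \<mu> where B: "laplacian_eigenbasis V r K \<phi> \<mu>" by (rule laplacian_eigenbasis)
  have "(\<Sum>x\<in>V. g0 x) = 0"
    unfolding g0_def using card_V_pos by (simp add: sum_subtractf)
  then have "spectral_gap V r * dot V g0 g0 \<le> dirichlet_form V r g0"
    by (rule laplacian_eigenbasis.poincare_centered[OF B])
  moreover have "dot V g0 g0 = dot V g g - (\<Sum>x\<in>V. g x)\<^sup>2 / card V"
    using sum_power2_diff_mean[OF finite_V V_nonempty, of g]
    unfolding dot_def g0_def by (simp add: power2_eq_square)
  moreover have "dirichlet_form V r g0 = dirichlet_form V r g"
    unfolding g0_def by (rule dirichlet_form_add_const)
  ultimately show ?thesis by simp
qed

end

text \<open>Dirichlet form of the product chain, in which the two coordinates move independently.\<close>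

definition pair_dirichlet_form :: "'a set \<Rightarrow> ('a \<Rightarrow> 'a \<Rightarrow> real) \<Rightarrow> ('a \<times> 'a \<Rightarrow> real) \<Rightarrow> real" where
  "pair_dirichlet_form V r w =
     (\<Sum>y\<in>V. dirichlet_form V r (\<lambda>x. w (x, y))) + (\<Sum>x\<in>V. dirichlet_form V r (\<lambda>y. w (x, y)))"

context unit_rate_chain
begin

lemma poincare_pair:
  "spectral_gap V r * ((\<Sum>x\<in>V. \<Sum>y\<in>V. (w (x, y))\<^sup>2) - (\<Sum>x\<in>V. \<Sum>y\<in>V. w (x, y))\<^sup>2 / (real (card V))\<^sup>2)
     \<le> pair_dirichlet_form V r w"
proof -
  define N where "N = real (card V)"
  define W where "W = (\<Sum>x\<in>V. \<Sum>y\<in>V. (w (x, y))\<^sup>2)"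
  define Q where "Q = (\<Sum>x\<in>V. (\<Sum>y\<in>V. w (x, y))\<^sup>2) / N + (\<Sum>y\<in>V. (\<Sum>x\<in>V. w (x, y))\<^sup>2) / N"
  have "spectral_gap V r * (W - (\<Sum>x\<in>V. (\<Sum>y\<in>V. w (x, y))\<^sup>2) / N)
      = (\<Sum>x\<in>V. spectral_gap V r * (dot V (\<lambda>y. w (x, y)) (\<lambda>y. w (x, y)) - (\<Sum>y\<in>V. w (x, y))\<^sup>2 / card V))"
    unfolding W_def N_def dot_def
    by (simp add: power2_eq_square sum_distrib_left sum_subtractf sum_divide_distrib right_diff_distrib)
  also have "\<dots> \<le> (\<Sum>x\<in>V. dirichlet_form V r (\<lambda>y. w (x, y)))"
    by (intro sum_mono poincare_inequality)
  finally have rows: "spectral_gap V r * (W - (\<Sum>x\<in>V. (\<Sum>y\<in>V. w (x, y))\<^sup>2) / N)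
      \<le> (\<Sum>x\<in>V. dirichlet_form V r (\<lambda>y. w (x, y)))" .
  have "W = (\<Sum>y\<in>V. \<Sum>x\<in>V. (w (x, y))\<^sup>2)"
    unfolding W_def by (rule sum.swap)
  then have "spectral_gap V r * (W - (\<Sum>y\<in>V. (\<Sum>x\<in>V. w (x, y))\<^sup>2) / N)
      = (\<Sum>y\<in>V. spectral_gap V r * (dot V (\<lambda>x. w (x, y)) (\<lambda>x. w (x, y)) - (\<Sum>x\<in>V. w (x, y))\<^sup>2 / card V))"
    unfolding N_def dot_def
    by (simp add: power2_eq_square sum_distrib_left sum_subtractf sum_divide_distrib right_diff_distrib)
  also have "\<dots> \<le> (\<Sum>y\<in>V. dirichlet_form V r (\<lambda>x. w (x, y)))"
    by (intro sum_mono poincare_inequality)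
  finally have cols: "spectral_gap V r * (W - (\<Sum>y\<in>V. (\<Sum>x\<in>V. w (x, y))\<^sup>2) / N)
      \<le> (\<Sum>y\<in>V. dirichlet_form V r (\<lambda>x. w (x, y)))" .
  have "spectral_gap V r * (W - (\<Sum>x\<in>V. \<Sum>y\<in>V. w (x, y))\<^sup>2 / N\<^sup>2) \<le> spectral_gap V r * (2 * W - Q)"
    using sum_row_col_power2_le[OF finite_V V_nonempty, of w] spectral_gap_pos
    unfolding W_def Q_def N_def by (intro mult_left_mono) auto
  also have "\<dots> \<le> pair_dirichlet_form V r w"
    using rows cols unfolding pair_dirichlet_form_def Q_def by (simp add: algebra_simps)
  finally show ?thesis unfolding W_def N_def .
qed

end

section \<open>Two walks killed at their meeting\<close>

definition offdiag_ext :: "'a set \<Rightarrow> ('a \<times> 'a \<Rightarrow> real) \<Rightarrow> 'a \<times> 'a \<Rightarrow> real" where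
  "offdiag_ext V v p = (if p \<in> offdiag V then v p else 0)"

lemma offdiag_eq: "offdiag V = V \<times> V - (\<lambda>x. (x, x)) ` V"
  unfolding offdiag_def by auto

lemma finite_offdiag: "finite V \<Longrightarrow> finite (offdiag V)"
  unfolding offdiag_eq by simp

lemma card_offdiag: "finite V \<Longrightarrow> card (offdiag V) = card V * card V - card V"
  unfolding offdiag_eq
  by (subst card_Diff_subset) (auto simp: card_image inj_on_def card_cartesian_product)

lemma sum_offdiag_ext:
  assumes "finite V"
  shows "(\<Sum>x\<in>V. \<Sum>y\<in>V. g x y * offdiag_ext V v (x, y)) = (\<Sum>q\<in>offdiag V. g (fst q) (snd q) * v q)"
proof -
  have "(\<Sum>x\<in>V. \<Sum>y\<in>V. g x y * offdiag_ext V v (x, y))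
      = (\<Sum>q\<in>V \<times> V. if q \<in> offdiag V then g (fst q) (snd q) * v q else 0)"
    unfolding sum.cartesian_product offdiag_ext_def by (intro sum.cong) auto
  also have "\<dots> = (\<Sum>q\<in>offdiag V. g (fst q) (snd q) * v q)"
    using assms by (subst sum.inter_filter[symmetric]) (auto simp: offdiag_def intro!: sum.cong)
  finally show ?thesis .
qed

lemma sum_offdiag_ext_const:
  "finite V \<Longrightarrow> (\<Sum>x\<in>V. \<Sum>y\<in>V. offdiag_ext V v (x, y)) = (\<Sum>q\<in>offdiag V. v q)"
  using sum_offdiag_ext[of V "\<lambda>_ _. 1" v] by simp

lemma sum_offdiag_ext_power2:
  "finite V \<Longrightarrow> (\<Sum>x\<in>V. \<Sum>y\<in>V. (offdiag_ext V v (x, y))\<^sup>2) = dot (offdiag V) v v"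
  using sum_offdiag_ext[of V "\<lambda>x y. offdiag_ext V v (x, y)" v]
  by (simp add: power2_eq_square dot_def offdiag_ext_def)

context unit_rate_chain
begin

lemma gen_matrix_eq_laplacian: "x \<in> V \<Longrightarrow> y \<in> V \<Longrightarrow> gen_matrix V r x y = - laplacian r x y"
  using total_rate_1 rate_diag finite_V
  by (auto simp: gen_matrix_def laplacian_def sum_diff1)

lemma killed_gen_eq_laplacian:
  assumes "p \<in> V \<times> V" "q \<in> V \<times> V"
  shows "killed_gen V r p q = - (laplacian r (fst p) (fst q) * (if snd p = snd q then 1 else 0)
      + (if fst p = fst q then 1 else 0) * laplacian r (snd p) (snd q))"
  using assms unfolding killed_gen_def by (auto simp: gen_matrix_eq_laplacian)

lemma symmetric_killed_gen: "symmetric_matrix (offdiag V) (killed_gen V r)"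
  using symmetric_laplacian killed_gen_eq_laplacian
  unfolding symmetric_matrix_def offdiag_def by auto

lemma mat_vec_killed_gen:
  assumes "p \<in> offdiag V"
  shows "mat_vec (offdiag V) (killed_gen V r) v p
    = - (mat_vec V (laplacian r) (\<lambda>x. offdiag_ext V v (x, snd p)) (fst p)
       + mat_vec V (laplacian r) (\<lambda>y. offdiag_ext V v (fst p, y)) (snd p))"
proof -
  obtain x y where xy: "p = (x, y)" "x \<in> V" "y \<in> V"
    using assms unfolding offdiag_def by auto
  have "mat_vec (offdiag V) (killed_gen V r) v p
      = (\<Sum>x'\<in>V. \<Sum>y'\<in>V. killed_gen V r p (x', y') * offdiag_ext V v (x', y'))"
    unfolding mat_vec_def using sum_offdiag_ext[OF finite_V, of "\<lambda>x' y'. killed_gen V r p (x', y')" v]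
    by simp
  also have "\<dots> = (\<Sum>x'\<in>V. \<Sum>y'\<in>V. - (if y' = y then laplacian r x x' * offdiag_ext V v (x', y') else 0)
      - (if x' = x then laplacian r y y' * offdiag_ext V v (x', y') else 0))"
    using xy by (intro sum.cong refl) (simp add: killed_gen_eq_laplacian algebra_simps eq_commute)
  also have "\<dots> = - (\<Sum>x'\<in>V. laplacian r x x' * offdiag_ext V v (x', y))
      - (\<Sum>y'\<in>V. laplacian r y y' * offdiag_ext V v (x, y'))"
    using xy finite_V by (simp add: sum_subtractf sum.swap[of _ V V] sum_negf)
  finally show ?thesis using xy unfolding mat_vec_def by simp
qed

lemma quadratic_form_killed_gen:
  "dot (offdiag V) v (mat_vec (offdiag V) (killed_gen V r) v) = - pair_dirichlet_form V r (offdiag_ext V v)"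
proof -
  let ?w = "offdiag_ext V v"
  have "dot (offdiag V) v (mat_vec (offdiag V) (killed_gen V r) v)
      = (\<Sum>x\<in>V. \<Sum>y\<in>V. - (mat_vec V (laplacian r) (\<lambda>x'. ?w (x', y)) x
          + mat_vec V (laplacian r) (\<lambda>y'. ?w (x, y')) y) * ?w (x, y))"
    unfolding dot_def sum_offdiag_ext[OF finite_V]
    by (intro sum.cong refl) (simp add: mat_vec_killed_gen mult.commute)
  also have "\<dots> = - ((\<Sum>x\<in>V. \<Sum>y\<in>V. ?w (x, y) * mat_vec V (laplacian r) (\<lambda>x'. ?w (x', y)) x)
      + (\<Sum>x\<in>V. \<Sum>y\<in>V. ?w (x, y) * mat_vec V (laplacian r) (\<lambda>y'. ?w (x, y')) y))"
    by (simp add: sum.distrib sum_negf sum_subtractf ring_distribs mult.commute)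
  also have "(\<Sum>x\<in>V. \<Sum>y\<in>V. ?w (x, y) * mat_vec V (laplacian r) (\<lambda>x'. ?w (x', y)) x)
      = (\<Sum>y\<in>V. \<Sum>x\<in>V. ?w (x, y) * mat_vec V (laplacian r) (\<lambda>x'. ?w (x', y)) x)"
    by (rule sum.swap)
  finally show ?thesis unfolding pair_dirichlet_form_def dirichlet_form_def dot_def by simp
qed

lemma column_sum_killed_gen:
  assumes "q \<in> offdiag V"
  shows "(\<Sum>p\<in>offdiag V. killed_gen V r p q) = -2 * r (fst q) (snd q)"
proof -
  obtain x y where xy: "q = (x, y)" "x \<in> V" "y \<in> V" "x \<noteq> y"
    using assms unfolding offdiag_def by auto
  have row: "mat_vec V (laplacian r) (\<lambda>z. if z \<in> V \<and> z \<noteq> u then 1 else 0) z = r z u"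
    if "z \<in> V" "u \<in> V" "z \<noteq> u" for z u
  proof -
    have "(\<Sum>z'\<in>V. r z z' * (if z' \<in> V \<and> z' \<noteq> u then 1 else 0))
        = (\<Sum>z'\<in>V. r z z' - (if z' = u then r z z' else 0))"
      by (intro sum.cong) auto
    also have "\<dots> = (\<Sum>z'\<in>V. r z z') - r z u"
      using that finite_V by (simp add: sum_subtractf)
    finally show ?thesis using mat_vec_laplacian[OF that(1)] total_rate_1[OF that(1)] that by simp
  qed
  have "(\<Sum>p\<in>offdiag V. killed_gen V r p q) = mat_vec (offdiag V) (killed_gen V r) (\<lambda>_. 1) q"
    using symmetric_killed_gen assms unfolding symmetric_matrix_def mat_vec_def by (auto intro: sum.cong)
  also have "\<dots> = - (r x y + r y x)"
    using mat_vec_killed_gen[OF assms, of "\<lambda>_. 1"] row[of x y] row[of y x] xy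
    by (simp add: offdiag_ext_def offdiag_def eq_commute)
  finally show ?thesis using xy rate_sym by simp
qed

end

text \<open>\<open>c\<close> and \<open>l\<close> stand for the weight and the decay rate of the slowest killed mode.\<close>

definition meeting_bounds :: "real \<Rightarrow> real \<Rightarrow> real \<Rightarrow> real \<Rightarrow> real \<Rightarrow> real \<Rightarrow> bool" where
  "meeting_bounds tm tr t a c l \<longleftrightarrow> 0 \<le> c \<and> c \<le> 1 \<and> 0 < l \<and> 0 < tm
     \<and> c / l \<le> tm \<and> tm \<le> c / l + tr \<and> 1 - c \<le> l * tr
     \<and> tm * (c * l * exp (- l * t)) \<le> a \<and> a \<le> tm * (c * l * exp (- l * t) + (1 - c) / t)"

locale killed_eigenbasis =
  unit_rate_chain V r + eigenbasis "offdiag V" "killed_gen V r" K \<psi> \<nu>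
  for V :: "'a set" and r K \<psi> \<nu>
begin

text \<open>These are the \<open>\<beta>\<^sub>k\<close>, \<open>\<lambda>\<^sub>k\<close> and \<open>c\<^sub>k\<close> of the proof sketch at the top.\<close>

definition mass :: "nat \<Rightarrow> real" where
  "mass k = (\<Sum>q\<in>offdiag V. \<psi> k q)"

definition decay :: "nat \<Rightarrow> real" where
  "decay k = - \<nu> k"

definition weight :: "nat \<Rightarrow> real" where
  "weight k = (mass k)\<^sup>2 / (real (card V))\<^sup>2"

lemma weight_nonneg: "weight k \<ge> 0"
  unfolding weight_def by simp

lemma decay_eq_pair_dirichlet_form: "k < K \<Longrightarrow> decay k = pair_dirichlet_form V r (offdiag_ext V (\<psi> k))"
  using eigenvalue_eq_quadratic_form quadratic_form_killed_gen unfolding decay_def by simp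

lemma decay_ge: "k < K \<Longrightarrow> spectral_gap V r * (1 - weight k) \<le> decay k"
  using poincare_pair[of "offdiag_ext V (\<psi> k)"] decay_eq_pair_dirichlet_form[of k]
    dot_eigenvector[of k k] finite_V
  by (simp add: sum_offdiag_ext_power2 sum_offdiag_ext_const weight_def mass_def)

lemma sum_weight: "(\<Sum>k<K. weight k) = 1 - 1 / card V"
proof -
  have "real (card V * card V - card V) = dot (offdiag V) (\<lambda>_. 1) (\<lambda>_. 1)"
    using card_offdiag[OF finite_V] unfolding dot_def by simp
  also have "\<dots> = (\<Sum>k<K. dot (offdiag V) (\<lambda>_. 1) (\<psi> k) * dot (offdiag V) (\<lambda>_. 1) (\<psi> k))"
    by (rule parseval)
  also have "\<dots> = (\<Sum>k<K. (mass k)\<^sup>2)"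
    unfolding mass_def dot_def by (simp add: power2_eq_square)
  finally have "(\<Sum>k<K. (mass k)\<^sup>2) = real (card V) * real (card V) - real (card V)"
    using card_V by simp
  then show ?thesis
    using card_V_pos unfolding weight_def
    by (simp add: sum_divide_distrib[symmetric] power2_eq_square field_simps)
qed

lemma weight_lt_1:
  assumes "k < K"
  shows "weight k < 1"
proof -
  have "weight k \<le> (\<Sum>j<K. weight j)"
    using assms weight_nonneg by (intro member_le_sum) auto
  moreover have "1 / real (card V) > 0" using card_V_pos by simp
  ultimately show ?thesis unfolding sum_weight by linarith
qed

lemma decay_pos:
  assumes "k < K"
  shows "decay k > 0"
proof -
  have "0 < spectral_gap V r * (1 - weight k)"
    using weight_lt_1[OF assms] spectral_gap_pos by simp
  then show ?thesis using decay_ge[OF assms] by linarith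
qed

text \<open>The combination of modes \<open>k0\<close> and \<open>k\<close> with zero total mass is admissible in the
  Poincare inequality of the product chain.\<close>

lemma decay_ge_spectral_gap:
  assumes k: "k < K" and k0: "k0 < K" "k \<noteq> k0" and min: "decay k0 \<le> decay k"
  shows "spectral_gap V r \<le> decay k"
proof (cases "mass k = 0")
  case True
  then show ?thesis using decay_ge[OF k] unfolding weight_def by simp
next
  case False
  define a where "a = mass k"
  define b where "b = mass k0"
  define v where "v p = a * \<psi> k0 p - b * \<psi> k p" for p
  have v_k0: "dot (offdiag V) v (\<psi> k0) = a" and v_k: "dot (offdiag V) v (\<psi> k) = - b"
    using dot_eigenvector k k0 unfolding v_def by (auto simp: dot_diff_left dot_scale_left)
  have "dot (offdiag V) v v = a * dot (offdiag V) v (\<psi> k0) - b * dot (offdiag V) v (\<psi> k)"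
    unfolding v_def[abs_def] by (simp add: dot_diff_right dot_scale_right)
  then have vv: "dot (offdiag V) v v = a\<^sup>2 + b\<^sup>2"
    using v_k0 v_k by (simp add: power2_eq_square)
  have v_sum: "(\<Sum>q\<in>offdiag V. v q) = 0"
    unfolding v_def a_def b_def mass_def by (simp add: sum_subtractf flip: sum_distrib_left)
  have "spectral_gap V r * (a\<^sup>2 + b\<^sup>2) \<le> pair_dirichlet_form V r (offdiag_ext V v)"
    using poincare_pair[of "offdiag_ext V v"] finite_V vv v_sum
    by (simp add: sum_offdiag_ext_power2 sum_offdiag_ext_const)
  also have "\<dots> = - dot (offdiag V) (mat_vec (offdiag V) (killed_gen V r) v) v"
    using quadratic_form_killed_gen[of v] by (simp add: dot_commute)
  also have "\<dots> = a\<^sup>2 * decay k0 + b\<^sup>2 * decay k"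
    unfolding v_def[abs_def] using dot_mat_vec_eigenvector[OF k0(1)] dot_mat_vec_eigenvector[OF k]
    by (simp add: dot_diff_right dot_scale_right v_k0[unfolded v_def] v_k[unfolded v_def] decay_def
        power2_eq_square)
  also have "\<dots> \<le> (a\<^sup>2 + b\<^sup>2) * decay k"
    using mult_left_mono[OF min, of "a\<^sup>2"] by (simp add: algebra_simps)
  finally show ?thesis
    using False unfolding a_def by (simp add: add_pos_nonneg mult.commute)
qed

lemma meet_survival_eigen:
  assumes "x \<in> V" "y \<in> V"
  shows "meet_survival V r s x y = (\<Sum>k<K. mass k * offdiag_ext V (\<psi> k) (x, y) * exp (- decay k * s))"
proof (cases "x = y")
  case False
  then have xy: "(x, y) \<in> offdiag V" using assms unfolding offdiag_def by auto
  have "meet_survival V r s x y = (\<Sum>q\<in>offdiag V. \<Sum>k<K. exp (\<nu> k * s) * \<psi> k (x, y) * \<psi> k q)"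
    unfolding meet_survival_def using False xy by (simp add: mat_exp_eigen)
  also have "\<dots> = (\<Sum>k<K. exp (\<nu> k * s) * \<psi> k (x, y) * mass k)"
    unfolding mass_def by (subst sum.swap) (simp add: sum_distrib_left)
  finally show ?thesis using xy by (simp add: offdiag_ext_def decay_def mult_ac)
qed (simp add: meet_survival_def offdiag_ext_def offdiag_def)

lemma t_meet_eigen: "t_meet V r = (\<Sum>k<K. weight k / decay k)"
proof -
  have "integral {0..} (\<lambda>s. meet_survival V r s x y) = (\<Sum>k<K. mass k * offdiag_ext V (\<psi> k) (x, y) / decay k)"
    if "x \<in> V" "y \<in> V" for x y
  proof -
    have "((\<lambda>s. \<Sum>k<K. mass k * offdiag_ext V (\<psi> k) (x, y) * exp (- decay k * s)) has_integral
        (\<Sum>k<K. mass k * offdiag_ext V (\<psi> k) (x, y) * (exp (- decay k * 0) / decay k))) {0..}"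
      by (intro has_integral_sum finite_lessThan has_integral_mult_right
          has_integral_exp_minus_to_infinity decay_pos) auto
    then show ?thesis using meet_survival_eigen[OF that] by (simp add: integral_unique)
  qed
  then have "t_meet V r = (1 / (real (card V))\<^sup>2) *
      (\<Sum>x\<in>V. \<Sum>y\<in>V. \<Sum>k<K. mass k / decay k * offdiag_ext V (\<psi> k) (x, y))"
    unfolding t_meet_def by (simp add: mult_ac)
  also have "\<dots> = (1 / (real (card V))\<^sup>2) *
      (\<Sum>x\<in>V. \<Sum>k<K. \<Sum>y\<in>V. mass k / decay k * offdiag_ext V (\<psi> k) (x, y))"
    by (intro arg_cong2[where f="(*)"] sum.cong refl) (rule sum.swap)
  also have "\<dots> = (1 / (real (card V))\<^sup>2) *
      (\<Sum>k<K. mass k / decay k * (\<Sum>x\<in>V. \<Sum>y\<in>V. offdiag_ext V (\<psi> k) (x, y)))"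
    by (subst sum.swap) (simp add: sum_distrib_left)
  also have "\<dots> = (1 / (real (card V))\<^sup>2) * (\<Sum>k<K. mass k / decay k * mass k)"
    by (simp add: sum_offdiag_ext_const[OF finite_V] mass_def)
  finally show ?thesis
    unfolding weight_def by (simp add: sum_distrib_left power2_eq_square)
qed

lemma rate_weighted_mass:
  assumes k: "k < K"
  shows "(\<Sum>q\<in>offdiag V. r (fst q) (snd q) * \<psi> k q) = decay k * mass k / 2"
proof -
  have "\<nu> k * mass k = (\<Sum>p\<in>offdiag V. mat_vec (offdiag V) (killed_gen V r) (\<psi> k) p)"
    unfolding mass_def sum_distrib_left using eigenvector[OF k] by simp
  also have "\<dots> = (\<Sum>q\<in>offdiag V. (\<Sum>p\<in>offdiag V. killed_gen V r p q) * \<psi> k q)"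
    unfolding mat_vec_def by (subst sum.swap) (simp add: sum_distrib_right)
  also have "\<dots> = -2 * (\<Sum>q\<in>offdiag V. r (fst q) (snd q) * \<psi> k q)"
    by (simp add: column_sum_killed_gen sum_distrib_left mult.assoc)
  finally show ?thesis unfolding decay_def by simp
qed

lemma alpha_eigen: "2 * alpha V r t / card V = (\<Sum>k<K. weight k * decay k * exp (- decay k * t))"
proof -
  have "(\<Sum>x\<in>V. \<Sum>y\<in>V. r x y / total_rate V r x * meet_survival V r t x y)
      = (\<Sum>x\<in>V. \<Sum>y\<in>V. \<Sum>k<K. mass k * exp (- decay k * t) * (r x y * offdiag_ext V (\<psi> k) (x, y)))"
    using total_rate_1 unfolding total_rate_def
    by (intro sum.cong refl) (simp add: meet_survival_eigen sum_distrib_left mult_ac)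
  also have "\<dots> = (\<Sum>x\<in>V. \<Sum>k<K. \<Sum>y\<in>V. mass k * exp (- decay k * t) * (r x y * offdiag_ext V (\<psi> k) (x, y)))"
    by (intro sum.cong refl) (rule sum.swap)
  also have "\<dots> = (\<Sum>k<K. mass k * exp (- decay k * t) *
      (\<Sum>x\<in>V. \<Sum>y\<in>V. r x y * offdiag_ext V (\<psi> k) (x, y)))"
    by (subst sum.swap) (simp add: sum_distrib_left)
  also have "\<dots> = (\<Sum>k<K. mass k * exp (- decay k * t) * (decay k * mass k / 2))"
    by (simp add: sum_offdiag_ext[OF finite_V] rate_weighted_mass)
  finally show ?thesis
    using card_V_pos unfolding alpha_def weight_def
    by (simp add: sum_distrib_left sum_divide_distrib power2_eq_square field_simps)
qed

lemma min_decay_exists: obtains k0 where "k0 < K" "\<And>k. k < K \<Longrightarrow> decay k0 \<le> decay k"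
proof -
  have "1 / real (card V) < 1" using card_V by simp
  then have "K \<noteq> 0" using sum_weight by (metis lessThan_0 sum.empty diff_gt_0_iff_gt less_irrefl)
  then have "Min (decay ` {..<K}) \<in> decay ` {..<K}" by (intro Min_in) auto
  then obtain k0 where "k0 < K" "decay k0 = Min (decay ` {..<K})" by auto
  then show ?thesis using that by simp
qed

lemma sum_other_weights: "k0 < K \<Longrightarrow> (\<Sum>k\<in>{..<K} - {k0}. weight k) \<le> 1 - weight k0"
proof -
  assume "k0 < K"
  then have "(\<Sum>k<K. weight k) = weight k0 + (\<Sum>k\<in>{..<K} - {k0}. weight k)"
    by (intro sum.remove) auto
  moreover have "1 / real (card V) > 0" using card_V_pos by simp
  ultimately show ?thesis unfolding sum_weight by linarith
qed

lemma t_meet_pos: "t_meet V r > 0"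
proof -
  have "(\<Sum>k<K. weight k) > 0" using card_V unfolding sum_weight by simp
  then obtain k where k: "k < K" "weight k > 0"
    using weight_nonneg by (metis lessThan_iff not_less sum_nonpos)
  have "weight k / decay k \<le> (\<Sum>k<K. weight k / decay k)"
    using k weight_nonneg decay_pos by (intro member_le_sum) (auto intro: divide_nonneg_pos)
  moreover have "weight k / decay k > 0" using k decay_pos by simp
  ultimately show ?thesis unfolding t_meet_eigen by linarith
qed

lemma t_meet_slowest_mode_bounds:
  assumes k0: "k0 < K" "\<And>k. k < K \<Longrightarrow> decay k0 \<le> decay k"
  shows "weight k0 / decay k0 \<le> t_meet V r" "t_meet V r \<le> weight k0 / decay k0 + t_rel V r"
proof -
  let ?others = "{..<K} - {k0}"
  have gap: "spectral_gap V r > 0" by (rule spectral_gap_pos)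
  have tm: "t_meet V r = weight k0 / decay k0 + (\<Sum>k\<in>?others. weight k / decay k)"
    unfolding t_meet_eigen using k0(1) by (subst sum.remove) auto
  have "0 \<le> (\<Sum>k\<in>?others. weight k / decay k)"
    by (intro sum_nonneg divide_nonneg_pos weight_nonneg decay_pos) auto
  then show "weight k0 / decay k0 \<le> t_meet V r" unfolding tm by simp
  have "weight k / decay k \<le> weight k / spectral_gap V r" if "k \<in> ?others" for k
  proof -
    from that have k: "k < K" "k \<noteq> k0" by auto
    have "spectral_gap V r \<le> decay k" by (rule decay_ge_spectral_gap[OF k(1) k0(1) k(2) k0(2)[OF k(1)]])
    then show ?thesis using gap weight_nonneg[of k] by (intro divide_left_mono) auto
  qed
  then have "(\<Sum>k\<in>?others. weight k / decay k) \<le> (\<Sum>k\<in>?others. weight k / spectral_gap V r)"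
    by (rule sum_mono)
  also have "\<dots> \<le> (1 - weight k0) / spectral_gap V r"
    using sum_other_weights[OF k0(1)] gap by (simp add: sum_divide_distrib[symmetric] divide_right_mono)
  also have "\<dots> \<le> t_rel V r"
    using weight_nonneg[of k0] gap unfolding t_rel_def by (simp add: divide_right_mono)
  finally show "t_meet V r \<le> weight k0 / decay k0 + t_rel V r" unfolding tm by simp
qed

lemma alpha_slowest_mode_bounds:
  assumes k0: "k0 < K" "\<And>k. k < K \<Longrightarrow> decay k0 \<le> decay k" and t: "t > 0"
  shows "weight k0 * decay k0 * exp (- decay k0 * t) \<le> 2 * alpha V r t / card V"
    "2 * alpha V r t / card V \<le> weight k0 * decay k0 * exp (- decay k0 * t) + (1 - weight k0) / t"
proof -
  let ?others = "{..<K} - {k0}"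
  define T where "T = (\<Sum>k\<in>?others. weight k * decay k * exp (- decay k * t))"
  have alpha: "2 * alpha V r t / card V = weight k0 * decay k0 * exp (- decay k0 * t) + T"
    unfolding alpha_eigen T_def using k0(1) by (subst sum.remove) auto
  have "T \<ge> 0"
    unfolding T_def using weight_nonneg decay_pos
    by (intro sum_nonneg mult_nonneg_nonneg) (auto simp: less_imp_le)
  then show "weight k0 * decay k0 * exp (- decay k0 * t) \<le> 2 * alpha V r t / card V"
    unfolding alpha by simp
  have "T \<le> (\<Sum>k\<in>?others. weight k * (1 / t))"
    unfolding T_def mult.assoc
    using weight_nonneg mult_exp_neg_le[OF t] by (intro sum_mono mult_left_mono) auto
  also have "\<dots> \<le> (1 - weight k0) / t"
    using sum_other_weights[OF k0(1)] t by (simp add: sum_divide_distrib[symmetric] divide_right_mono)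
  finally show "2 * alpha V r t / card V \<le> weight k0 * decay k0 * exp (- decay k0 * t) + (1 - weight k0) / t"
    unfolding alpha by simp
qed

lemma slowest_mode_meeting_bounds:
  assumes "t > 0"
  shows "\<exists>c l. meeting_bounds (t_meet V r) (t_rel V r) t (2 * t_meet V r * alpha V r t / card V) c l"
proof -
  obtain k0 where k0: "k0 < K" "\<And>k. k < K \<Longrightarrow> decay k0 \<le> decay k"
    using min_decay_exists by blast
  have tm_alpha: "2 * t_meet V r * alpha V r t / card V = t_meet V r * (2 * alpha V r t / card V)"
    by simp
  have "1 - weight k0 \<le> decay k0 * t_rel V r"
    using decay_ge[OF k0(1)] spectral_gap_pos unfolding t_rel_def by (simp add: field_simps)
  moreover have "t_meet V r * (weight k0 * decay k0 * exp (- decay k0 * t))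
      \<le> 2 * t_meet V r * alpha V r t / card V"
    unfolding tm_alpha using alpha_slowest_mode_bounds(1)[OF k0 assms] t_meet_pos
    by (intro mult_left_mono) auto
  moreover have "2 * t_meet V r * alpha V r t / card V
      \<le> t_meet V r * (weight k0 * decay k0 * exp (- decay k0 * t) + (1 - weight k0) / t)"
    unfolding tm_alpha using alpha_slowest_mode_bounds(2)[OF k0 assms] t_meet_pos
    by (intro mult_left_mono) auto
  ultimately have "meeting_bounds (t_meet V r) (t_rel V r) t (2 * t_meet V r * alpha V r t / card V)
      (weight k0) (decay k0)"
    unfolding meeting_bounds_def
    using weight_nonneg weight_lt_1[OF k0(1)] decay_pos[OF k0(1)] t_meet_pos
      t_meet_slowest_mode_bounds[OF k0]
    by (simp add: less_imp_le)
  then show ?thesis by blast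
qed

end

context unit_rate_chain
begin

lemma killed_eigenbasis: obtains K \<psi> \<nu> where "killed_eigenbasis V r K \<psi> \<nu>"
proof -
  obtain K \<psi> \<nu> where "orthonormal_family (offdiag V) K \<psi>"
      "eigen_family (offdiag V) (killed_gen V r) K \<psi> \<nu>" "complete_family (offdiag V) K \<psi>"
    using symmetric_matrix_eigenbasis[OF finite_offdiag[OF finite_V] symmetric_killed_gen] by blast
  then have "killed_eigenbasis V r K \<psi> \<nu>"
    by (intro killed_eigenbasis.intro unit_rate_chain_axioms eigenbasis.intro
        finite_offdiag[OF finite_V] symmetric_killed_gen)
  then show ?thesis by (rule that)
qed

lemma meeting_bounds_exist:
  assumes "t > 0"
  shows "\<exists>c l. meeting_bounds (t_meet V r) (t_rel V r) t (2 * t_meet V r * alpha V r t / card V) c l"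
proof -
  obtain K \<psi> \<nu> where "killed_eigenbasis V r K \<psi> \<nu>" by (rule killed_eigenbasis)
  from killed_eigenbasis.slowest_mode_meeting_bounds[OF this assms] show ?thesis .
qed

end

section \<open>Asymptotics\<close>

lemma transitive_chain_imp_unit_rate_chain:
  "transitive_chain V r \<Longrightarrow> card V \<ge> 2 \<Longrightarrow> unit_rate_chain V r"
  unfolding transitive_chain_def markov_rates_def symmetric_rates_def total_rate_def
  by unfold_locales auto

lemma spectral_bounds_algebra:
  fixes c l tm tr :: real
  assumes "c \<le> 1" "l > 0" "tm > 0" "c / l \<le> tm" "tm \<le> c / l + tr" "1 - c \<le> l * tr"
    and "tr / tm < 1"
  shows "c \<le> l * tm" "l * tm \<le> 1 / (1 - tr / tm)" "1 - (tr / tm) / (1 - tr / tm) \<le> c"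
proof -
  define \<rho> where "\<rho> = tr / tm"
  have tr: "l * tr = l * tm * \<rho>" using assms(3) unfolding \<rho>_def by simp
  show "c \<le> l * tm" using assms(2,4) by (simp add: divide_le_eq mult.commute)
  have "l * tm \<le> l * (c / l + tr)" using assms(2,5) by (simp add: mult_left_mono)
  also have "\<dots> = c + l * tr" using assms(2) by (simp add: distrib_left)
  finally have "l * tm * (1 - \<rho>) \<le> 1" using assms(1) tr by (simp add: right_diff_distrib)
  moreover have "1 - \<rho> > 0" using assms(7) unfolding \<rho>_def by simp
  ultimately have ltm: "l * tm \<le> 1 / (1 - \<rho>)" by (simp add: pos_le_divide_eq)
  then show "l * tm \<le> 1 / (1 - tr / tm)" unfolding \<rho>_def .
  have "l * tr \<ge> 0" using assms(1,6) by linarith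
  then have "\<rho> \<ge> 0" using assms(2,3) unfolding \<rho>_def by (simp add: zero_le_mult_iff)
  then have "l * tr \<le> 1 / (1 - \<rho>) * \<rho>" unfolding tr using mult_right_mono[OF ltm] by blast
  then have "1 - \<rho> / (1 - \<rho>) \<le> c" using assms(6) by simp
  then show "1 - (tr / tm) / (1 - tr / tm) \<le> c" unfolding \<rho>_def .
qed

lemma spectral_bounds_tendsto:
  fixes c l tm tr :: "nat \<Rightarrow> real"
  assumes bounds: "\<forall>\<^sub>F n in sequentially. c n \<le> 1 \<and> l n > 0 \<and> tm n > 0
      \<and> c n / l n \<le> tm n \<and> tm n \<le> c n / l n + tr n \<and> 1 - c n \<le> l n * tr n"
    and ratio: "(\<lambda>n. tr n / tm n) \<longlonglongrightarrow> 0"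
  shows "c \<longlonglongrightarrow> 1" "(\<lambda>n. l n * tm n) \<longlonglongrightarrow> 1"
proof -
  have lim: "(\<lambda>n. 1 - (tr n / tm n) / (1 - tr n / tm n)) \<longlonglongrightarrow> 1" "(\<lambda>n. 1 / (1 - tr n / tm n)) \<longlonglongrightarrow> 1"
    using tendsto_diff[OF tendsto_const[of 1] tendsto_divide[OF ratio tendsto_diff[OF tendsto_const[of 1] ratio]]]
      tendsto_divide[OF tendsto_const[of 1] tendsto_diff[OF tendsto_const[of 1] ratio]]
    by simp_all
  have "\<forall>\<^sub>F n in sequentially. c n \<le> l n * tm n \<and> l n * tm n \<le> 1 / (1 - tr n / tm n)
      \<and> 1 - (tr n / tm n) / (1 - tr n / tm n) \<le> c n \<and> c n \<le> 1"
    using bounds order_tendstoD(2)[OF ratio zero_less_one]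
  proof eventually_elim
    case (elim n)
    then show ?case using spectral_bounds_algebra[of "c n" "l n" "tm n" "tr n"] by auto
  qed
  then have ev: "\<forall>\<^sub>F n in sequentially. c n \<le> l n * tm n" "\<forall>\<^sub>F n in sequentially. l n * tm n \<le> 1 / (1 - tr n / tm n)"
    "\<forall>\<^sub>F n in sequentially. 1 - (tr n / tm n) / (1 - tr n / tm n) \<le> c n" "\<forall>\<^sub>F n in sequentially. c n \<le> 1"
    by (auto elim: eventually_mono)
  show c: "c \<longlonglongrightarrow> 1" by (rule tendsto_sandwich[OF ev(3,4) lim(1) tendsto_const])
  show "(\<lambda>n. l n * tm n) \<longlonglongrightarrow> 1" by (rule tendsto_sandwich[OF ev(1,2) c lim(2)])
qed

lemma meeting_bounds_tendsto:
  fixes c l tm tr t a :: "nat \<Rightarrow> real"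
  assumes bounds: "\<forall>\<^sub>F n in sequentially. t n > 0 \<and> meeting_bounds (tm n) (tr n) (t n) (a n) (c n) (l n)"
    and tr_tm: "(\<lambda>n. tr n / tm n) \<longlonglongrightarrow> 0" and tr_t: "(\<lambda>n. tr n / t n) \<longlonglongrightarrow> 0"
    and t_tm: "(\<lambda>n. t n / tm n) \<longlonglongrightarrow> 0"
  shows "a \<longlonglongrightarrow> 1"
proof -
  have "\<forall>\<^sub>F n in sequentially. c n \<le> 1 \<and> l n > 0 \<and> tm n > 0
      \<and> c n / l n \<le> tm n \<and> tm n \<le> c n / l n + tr n \<and> 1 - c n \<le> l n * tr n"
    using bounds by eventually_elim (simp add: meeting_bounds_def)
  then have "c \<longlonglongrightarrow> 1" and ltm: "(\<lambda>n. l n * tm n) \<longlonglongrightarrow> 1"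
    using spectral_bounds_tendsto[OF _ tr_tm] by blast+
  then have "(\<lambda>n. l n * tm n * c n * exp (- (l n * tm n * (t n / tm n)))) \<longlonglongrightarrow> 1 * 1 * exp (- (1 * 0))"
    using t_tm by (intro tendsto_intros)
  moreover have "\<forall>\<^sub>F n in sequentially. l n * tm n * c n * exp (- (l n * tm n * (t n / tm n)))
      = tm n * (c n * l n * exp (- l n * t n))"
    using bounds by eventually_elim (auto simp: meeting_bounds_def mult_ac)
  ultimately have lower: "(\<lambda>n. tm n * (c n * l n * exp (- l n * t n))) \<longlonglongrightarrow> 1"
    by (simp add: Lim_transform_eventually)
  have "(\<lambda>n. tm n * (c n * l n * exp (- l n * t n)) + l n * tm n * (tr n / t n)) \<longlonglongrightarrow> 1 + 1 * 0"
    using lower ltm tr_t by (intro tendsto_intros)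
  then have upper: "(\<lambda>n. tm n * (c n * l n * exp (- l n * t n)) + l n * tm n * (tr n / t n)) \<longlonglongrightarrow> 1"
    by simp
  have "\<forall>\<^sub>F n in sequentially. tm n * (c n * l n * exp (- l n * t n)) \<le> a n \<and>
      a n \<le> tm n * (c n * l n * exp (- l n * t n)) + l n * tm n * (tr n / t n)"
    using bounds
  proof eventually_elim
    case (elim n)
    then have "tm n * ((1 - c n) / t n) \<le> tm n * (l n * tr n / t n)"
      by (intro mult_left_mono divide_right_mono) (auto simp: meeting_bounds_def)
    then show ?case using elim by (simp add: meeting_bounds_def algebra_simps)
  qed
  then show ?thesis
    by (intro tendsto_sandwich[OF _ _ lower upper]) (auto elim: eventually_mono)
qed

theorem proposition7p1:
  fixes r :: "nat \<Rightarrow> nat \<Rightarrow> nat \<Rightarrow> real" and t :: "nat \<Rightarrow> real"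
  assumes chains: "\<forall>n\<ge>2. transitive_chain {..<n} (r n)"
    and ratio: "(\<lambda>n. t_rel {..<n} (r n) / t_meet {..<n} (r n)) \<longlonglongrightarrow> 0"
    and tpos: "\<forall>n. t n > 0"
    and t_lower: "(\<lambda>n. t_rel {..<n} (r n) / t n) \<longlonglongrightarrow> 0"
    and t_upper: "(\<lambda>n. t n / t_meet {..<n} (r n)) \<longlonglongrightarrow> 0"
  shows "(\<lambda>n. 2 * t_meet {..<n} (r n) * alpha {..<n} (r n) (t n) / real n) \<longlonglongrightarrow> 1"
proof -
  have "\<exists>c l. meeting_bounds (t_meet {..<n} (r n)) (t_rel {..<n} (r n)) (t n)
      (2 * t_meet {..<n} (r n) * alpha {..<n} (r n) (t n) / real n) c l" if "n \<ge> 2" for n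
    using unit_rate_chain.meeting_bounds_exist[OF transitive_chain_imp_unit_rate_chain] chains tpos that
    by (metis card_lessThan)
  then obtain c l where bounds: "\<And>n. n \<ge> 2 \<Longrightarrow> meeting_bounds (t_meet {..<n} (r n)) (t_rel {..<n} (r n)) (t n)
      (2 * t_meet {..<n} (r n) * alpha {..<n} (r n) (t n) / real n) (c n) (l n)"
    by metis
  have "\<forall>\<^sub>F n in sequentially. t n > 0 \<and> meeting_bounds (t_meet {..<n} (r n)) (t_rel {..<n} (r n))
      (t n) (2 * t_meet {..<n} (r n) * alpha {..<n} (r n) (t n) / real n) (c n) (l n)"
    using eventually_ge_at_top[of "2::nat"] by eventually_elim (simp add: tpos bounds)
  then show ?thesis using ratio t_lower t_upper by (rule meeting_bounds_tendsto)
qed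

end
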